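(* Let $\phi$ be a pure state not in the output free set $\mathcal F'$, in a convex resource theory, and let $\rho$ be any input state. For any $\varepsilon$ satisfying $\varepsilon\ge\left(\frac{\Omega_{\mathcal F}(\rho)}{R^{\mathcal F'}_{\mathcal F'}(\phi)-1}+1\right)^{-1}$, there exists a resource--non-generating probabilistic transformation $\rho\to\tau_\varepsilon$ where $\tau_\varepsilon$ is a state with $F(\tau_\varepsilon,\phi)\ge1-\varepsilon$. If the resource theory is affine, the same conclusion holds for any $\varepsilon$ satisfying $\varepsilon\ge\left(\frac{\Omega_{\mathcal F}(\rho)}{R_{\mathcal F'}(\phi)-1}+1\right)^{-1}$.
   Context: Finite dimensions; $A\le B$ means $B-A\ge0$. Each space carries a closed convex set $\mathcal F$ of free density operators; "affine" means additionally $\mathcal F=\mathrm{aff}(\mathcal F)\cap\mathcal D$ on each space. $\mathrm{cone}(\mathcal F)=\{\lambda\sigma:\lambda\ge0,\sigma\in\mathcal F\}$, $A\le_{\mathcal F}B$ iff $B-A\in\mathrm{cone}(\mathcal F)$. $R_{\max}(X\|Y)=\inf\{\lambda:X\le\lambda Y\}$, $R^{\mathcal F}_{\max}(X\|Y)=\inf\{\lambda:X\le_{\mathcal F}\lambda Y\}$; conventions $\inf\emptyset=\infty$, $c/\infty=0$, $0^{-1}=\infty$, $\infty^{-1}=0$. $R_{\mathcal F}(\rho)=\min_{\sigma\in\mathcal F}R_{\max}(\rho\|\sigma)$, $R^{\mathcal F}_{\mathcal F}(\rho)=\min_{\sigma\in\mathcal F}R^{\mathcal F}_{\max}(\rho\|\sigma)$,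 $\Omega_{\mathcal F}(\rho)=\inf_{\sigma\in\mathcal F}R_{\max}(\rho\|\sigma)R_{\max}(\sigma\|\rho)$. Fidelity $F(\rho,\sigma)=\|\sqrt\rho\sqrt\sigma\|_1^2$. $\mathbb O$: completely positive trace-non-increasing maps $\mathcal E$ such that for every $\sigma\in\mathcal F$ there exist $\sigma'\in\mathcal F'$ and $p\in[0,1]$ with $\mathcal E(\sigma)=p\sigma'$. A probabilistic transformation $\rho\to\tau$ exists iff $\tau$ lies in the closure of $\{\mathcal E(\rho)/\mathrm{Tr}\,\mathcal E(\rho):\mathcal E\in\mathbb O,\ \mathrm{Tr}\,\mathcal E(\rho)>0\}$. *)

theory Defs
  imports "HOL-Analysis.Analysis" "HOL-Library.Extended_Real"
begin

definition adj :: "complex^'n^'m \<Rightarrow> complex^'m^'n" where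
  "adj A = (\<chi> i j. cnj (A $ j $ i))"

definition qform :: "complex^'n^'n \<Rightarrow> complex^'n \<Rightarrow> complex" where
  "qform A x = (\<Sum>i\<in>UNIV. \<Sum>j\<in>UNIV. cnj (x $ i) * A $ i $ j * x $ j)"

definition psd :: "complex^'n^'n \<Rightarrow> bool" where
  "psd A \<longleftrightarrow> (\<forall>x. Im (qform A x) = 0 \<and> Re (qform A x) \<ge> 0)"

definition loewner_le :: "complex^'n^'n \<Rightarrow> complex^'n^'n \<Rightarrow> bool" where
  "loewner_le A B \<longleftrightarrow> psd (B - A)"

definition density :: "complex^'n^'n \<Rightarrow> bool" where
  "density \<rho> \<longleftrightarrow> psd \<rho> \<and> trace \<rho> = 1"

definition outer :: "complex^'n \<Rightarrow> complex^'n^'n" where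
  "outer v = (\<chi> i j. v $ i * cnj (v $ j))"

definition pure_state :: "complex^'n^'n \<Rightarrow> bool" where
  "pure_state \<phi> \<longleftrightarrow> density \<phi> \<and> (\<exists>v. \<phi> = outer v)"

definition msqrt :: "complex^'n^'n \<Rightarrow> complex^'n^'n" where
  "msqrt A = (THE B. psd B \<and> B ** B = A)"

definition trace_norm :: "complex^'n^'n \<Rightarrow> real" where
  "trace_norm M = Re (trace (msqrt (adj M ** M)))"

definition fidelity :: "complex^'n^'n \<Rightarrow> complex^'n^'n \<Rightarrow> real" where
  "fidelity \<rho> \<sigma> = (trace_norm (msqrt \<rho> ** msqrt \<sigma>))\<^sup>2"

definition free_set :: "(complex^'n^'n) set \<Rightarrow> bool" where
  "free_set F \<longleftrightarrow> F \<noteq> {} \<and> closed F \<and> convex F \<and> (\<forall>\<sigma>\<in>F. density \<sigma>)"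

definition affine_free :: "(complex^'n^'n) set \<Rightarrow> bool" where
  "affine_free F \<longleftrightarrow> F = (affine hull F) \<inter> {\<sigma>. density \<sigma>}"

definition free_cone :: "(complex^'n^'n) set \<Rightarrow> (complex^'n^'n) set" where
  "free_cone F = {c *\<^sub>R \<sigma> | c \<sigma>. c \<ge> 0 \<and> \<sigma> \<in> F}"

definition free_le :: "(complex^'n^'n) set \<Rightarrow> complex^'n^'n \<Rightarrow> complex^'n^'n \<Rightarrow> bool" where
  "free_le F A B \<longleftrightarrow> B - A \<in> free_cone F"

text \<open>Max-relative quantities, valued in the extended reals (Inf {} = \<infinity>).\<close>
definition Rmax :: "complex^'n^'n \<Rightarrow> complex^'n^'n \<Rightarrow> ereal" where
  "Rmax X Y = Inf {ereal l | l. loewner_le X (l *\<^sub>R Y)}"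

definition RmaxF :: "(complex^'n^'n) set \<Rightarrow> complex^'n^'n \<Rightarrow> complex^'n^'n \<Rightarrow> ereal" where
  "RmaxF F X Y = Inf {ereal l | l. free_le F X (l *\<^sub>R Y)}"

text \<open>Generalized robustness R_F and standard robustness R^F_F (minimum over F,
  written as an infimum).\<close>
definition gen_robustness :: "(complex^'n^'n) set \<Rightarrow> complex^'n^'n \<Rightarrow> ereal" where
  "gen_robustness F \<rho> = (INF \<sigma>\<in>F. Rmax \<rho> \<sigma>)"

definition std_robustness :: "(complex^'n^'n) set \<Rightarrow> complex^'n^'n \<Rightarrow> ereal" where
  "std_robustness F \<rho> = (INF \<sigma>\<in>F. RmaxF F \<rho> \<sigma>)"

definition Omega :: "(complex^'n^'n) set \<Rightarrow> complex^'n^'n \<Rightarrow> ereal" where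
  "Omega F \<rho> = (INF \<sigma>\<in>F. Rmax \<rho> \<sigma> * Rmax \<sigma> \<rho>)"

text \<open>A block operator on C^k \<otimes> H is given by its
  k\<times>k family of blocks X i j; positivity of it is the quadratic-form condition
  written out; (id_k \<otimes> E) acts blockwise.\<close>
definition block_psd :: "nat \<Rightarrow> (nat \<Rightarrow> nat \<Rightarrow> complex^'n^'n) \<Rightarrow> bool" where
  "block_psd k X \<longleftrightarrow> (\<forall>x :: nat \<Rightarrow> complex^'n.
     (let q = (\<Sum>i<k. \<Sum>j<k. \<Sum>a\<in>UNIV. \<Sum>b\<in>UNIV.
                 cnj (x i $ a) * X i j $ a $ b * x j $ b)
      in Im q = 0 \<and> Re q \<ge> 0))"

definition cscale :: "complex \<Rightarrow> complex^'n^'m \<Rightarrow> complex^'n^'m" where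
  "cscale c A = (\<chi> i j. c * A $ i $ j)"

definition clinear_map :: "(complex^'n^'n \<Rightarrow> complex^'m^'m) \<Rightarrow> bool" where
  "clinear_map E \<longleftrightarrow> (\<forall>X Y. E (X + Y) = E X + E Y) \<and> (\<forall>c X. E (cscale c X) = cscale c (E X))"

definition completely_positive :: "(complex^'n^'n \<Rightarrow> complex^'m^'m) \<Rightarrow> bool" where
  "completely_positive E \<longleftrightarrow> clinear_map E \<and>
     (\<forall>k X. block_psd k X \<longrightarrow> block_psd k (\<lambda>i j. E (X i j)))"

definition trace_nonincreasing :: "(complex^'n^'n \<Rightarrow> complex^'m^'m) \<Rightarrow> bool" where
  "trace_nonincreasing E \<longleftrightarrow> (\<forall>X. psd X \<longrightarrow> Re (trace (E X)) \<le> Re (trace X))"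

definition RNG_ops :: "(complex^'n^'n) set \<Rightarrow> (complex^'m^'m) set
    \<Rightarrow> (complex^'n^'n \<Rightarrow> complex^'m^'m) set" where
  "RNG_ops F F' = {E. completely_positive E \<and> trace_nonincreasing E \<and>
     (\<forall>\<sigma>\<in>F. \<exists>\<sigma>'\<in>F'. \<exists>p. 0 \<le> p \<and> p \<le> 1 \<and> E \<sigma> = p *\<^sub>R \<sigma>')}"

definition prob_transform :: "(complex^'n^'n) set \<Rightarrow> (complex^'m^'m) set
    \<Rightarrow> complex^'n^'n \<Rightarrow> complex^'m^'m \<Rightarrow> bool" where
  "prob_transform F F' \<rho> \<tau> \<longleftrightarrow>
     \<tau> \<in> closure {(1 / Re (trace (E \<rho>))) *\<^sub>R E \<rho> | E.
                    E \<in> RNG_ops F F' \<and> Re (trace (E \<rho>)) > 0}"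

text \<open>The threshold (\<Omega>/(R - 1) + 1)^(-1), with c/\<infinity> = 0, 0^(-1) = \<infinity>, \<infinity>^(-1) = 0
  (division written as multiplication by inverse in ereal).\<close>
definition eps_threshold :: "ereal \<Rightarrow> ereal \<Rightarrow> ereal" where
  "eps_threshold \<Omega> R = inverse (\<Omega> * inverse (R - 1) + 1)"

lemma "inverse (0::ereal) = \<infinity>" "inverse (\<infinity>::ereal) = 0" "(c::ereal) * inverse \<infinity> = 0"
    "(\<infinity>::ereal) * inverse \<infinity> = 0"
  by (simp_all add: zero_ereal_def[symmetric])

end

(*
  If \<Omega>_F(\<rho>) > K, no element of cone(F) (of span F, when F is affine) lies between \<rho> and
  K \<rho>.  A separating hyperplane turns this into linear functionals A \<le> B on that cone,
  nonnegative on positive matrices, with A(\<rho>) > 0 and A(\<rho>) \<ge> K B(\<rho>).  If \<phi> \<le> l \<sigma>' for a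
  free \<sigma>' and l < R' (in the order of cone(F') for the standard robustness), the
  measure-and-prepare map X \<mapsto> A(X) \<phi> + B(X) (l \<sigma>' - \<phi>) sends free states into cone(F'), and
  its normalised output on \<rho> has fidelity at least A(\<rho>) / (A(\<rho>) + (l - 1) B(\<rho>)) \<ge>
  K / (K + R' - 1) with \<phi>.  Letting K tend to \<Omega>_F(\<rho>) and R' to the robustness of \<phi>, the
  fidelity approaches 1 minus the threshold, and compactness of the state space gives a state in
  the closure of the outputs that attains it.
*)

theory Submission
  imports Defs
begin

definition cinner :: "complex^'n \<Rightarrow> complex^'n \<Rightarrow> complex" where
  "cinner x y = (\<Sum>i\<in>UNIV. cnj (x$i) * y$i)"

definition hermitian :: "complex^'n^'n \<Rightarrow> bool" where
  "hermitian A \<longleftrightarrow> (\<forall>i j. A$i$j = cnj (A$j$i))"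

lemma cinner_add_right: "cinner x (y + z) = cinner x y + cinner x z"
  by (simp add: cinner_def distrib_left sum.distrib)

lemma cinner_add_left: "cinner (x + y) z = cinner x z + cinner y z"
  by (simp add: cinner_def distrib_right sum.distrib)

lemma cinner_diff_right: "cinner x (y - z) = cinner x y - cinner x z"
  by (simp add: cinner_def right_diff_distrib sum_subtractf)

lemma cinner_scale_right: "cinner x (c *s y) = c * cinner x y"
  by (simp add: cinner_def sum_distrib_left mult_ac)

lemma cinner_scale_left: "cinner (c *s x) y = cnj c * cinner x y"
  by (simp add: cinner_def sum_distrib_left mult_ac)

lemma cinner_sum_right: "cinner x (\<Sum>u\<in>U. f u) = (\<Sum>u\<in>U. cinner x (f u))"
  by (simp add: cinner_def sum_component sum_distrib_left) (rule sum.swap)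

lemma cinner_zero_left [simp]: "cinner 0 x = 0"
  by (simp add: cinner_def)

lemma cinner_zero_right [simp]: "cinner x 0 = 0"
  by (simp add: cinner_def)

lemma cinner_commute: "cinner y x = cnj (cinner x y)"
  by (simp add: cinner_def mult.commute)

lemma cinner_self: "cinner x x = complex_of_real ((norm x)\<^sup>2)"
proof -
  have "cnj z * z = complex_of_real ((cmod z)\<^sup>2)" for z
    by (metis complex_norm_square mult.commute)
  then have "cinner x x = complex_of_real (\<Sum>i\<in>UNIV. (cmod (x$i))\<^sup>2)"
    unfolding cinner_def by simp
  also have "(\<Sum>i\<in>UNIV. (cmod (x$i))\<^sup>2) = (norm x)\<^sup>2"
    by (simp add: norm_vec_def L2_set_def sum_nonneg)
  finally show ?thesis .
qed

lemma cinner_self_real: "cinner x x = complex_of_real (Re (cinner x x))"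
  by (simp add: cinner_self)

lemma cinner_self_pos: "x \<noteq> 0 \<Longrightarrow> Re (cinner x x) > 0"
  by (simp add: cinner_self)

lemma norm_eq_1_if_cinner_self:
  assumes "cinner x x = 1" shows "norm x = 1"
proof -
  have "complex_of_real ((norm x)\<^sup>2) = 1" using assms cinner_self[of x] by (simp only:)
  then have "(norm x)\<^sup>2 = 1" by (simp only: of_real_eq_1_iff)
  then show ?thesis using norm_ge_zero[of x] by (simp add: power2_eq_1_iff)
qed

lemma inner_vec_eq_Re_cinner: "inner x y = Re (cinner x y)"
  by (simp add: inner_vec_def cinner_def inner_complex_def Re_sum)

lemma cinner_axis_left: "cinner (axis i 1) y = y$i"
  by (simp add: cinner_def axis_def if_distrib if_distribR cong: if_cong)

lemma continuous_on_cinner [continuous_intros]: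
  "continuous_on S f \<Longrightarrow> continuous_on S g \<Longrightarrow> continuous_on S (\<lambda>x. cinner (f x) (g x))"
  unfolding cinner_def by (intro continuous_intros)

lemma continuous_on_matrix_vector_mult [continuous_intros]:
  "continuous_on S f \<Longrightarrow> continuous_on S (\<lambda>x. (A::complex^'n^'m) *v f x)"
  unfolding matrix_vector_mult_def by (intro continuous_intros continuous_on_vec_lambda)

lemma matrix_vector_mult_sum: "(A::complex^'n^'m) *v (\<Sum>u\<in>U. f u) = (\<Sum>u\<in>U. A *v f u)"
  by (induction U rule: infinite_finite_induct) (auto simp: matrix_vector_right_distrib)

lemma qform_cinner: "qform A x = cinner x (A *v x)"
  by (simp add: qform_def cinner_def matrix_vector_mult_def sum_distrib_left mult_ac)

lemma qform_add: "qform (A + B) x = qform A x + qform B x"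
  unfolding qform_cinner by (simp add: matrix_vector_mult_add_rdistrib cinner_add_right)

lemma qform_scale: "qform A (c *s x) = cnj c * c * qform A x"
  unfolding qform_cinner vector_scalar_commute cinner_scale_left cinner_scale_right by simp

lemma matrix_scaleR_vector_mult:
  "((r::real) *\<^sub>R (A::complex^'n^'m)) *v x = complex_of_real r *s (A *v x)"
  by (simp add: vec_eq_iff matrix_vector_mult_def sum_distrib_left mult.assoc
      scaleR_conv_of_real[where 'a = complex])

lemma qform_scaleR: "qform ((r::real) *\<^sub>R A) x = complex_of_real r * qform A x"
  unfolding qform_cinner matrix_scaleR_vector_mult cinner_scale_right ..

lemma qform_0 [simp]: "qform 0 x = 0"
  by (simp add: qform_def)

lemma qform_sum: "qform (\<Sum>t\<in>T. M t) u = (\<Sum>t\<in>T. qform (M t) u)"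
  by (induction T rule: infinite_finite_induct) (auto simp: qform_add)

lemma qform_axis:
  "qform A (axis i 1 + c *s axis j 1) = A$i$i + c * A$i$j + cnj c * A$j$i + cnj c * c * A$j$j"
proof -
  have col: "A *v axis k 1 = (\<chi> l. A$l$k)" for k
    by (simp add: vec_eq_iff matrix_vector_mult_def axis_def if_distrib if_distribR cong: if_cong)
  show ?thesis
    unfolding qform_cinner matrix_vector_right_distrib vector_scalar_commute cinner_add_left
      cinner_add_right cinner_scale_left cinner_scale_right cinner_axis_left col
    by (simp add: algebra_simps)
qed

lemma cinner_hermitian:
  assumes "hermitian A" shows "cinner x (A *v y) = cinner (A *v x) y"
proof -
  have c: "cnj (A$j$i) = A$i$j" for i j using assms unfolding hermitian_def by (metis complex_cnj_cnj)
  have "cinner x (A *v y) = (\<Sum>j\<in>UNIV. \<Sum>i\<in>UNIV. cnj (x$i) * A$i$j * y$j)"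
    by (simp add: cinner_def matrix_vector_mult_def sum_distrib_left mult.assoc) (rule sum.swap)
  also have "\<dots> = (\<Sum>j\<in>UNIV. \<Sum>i\<in>UNIV. cnj (A$j$i) * cnj (x$i) * y$j)"
    by (simp only: c mult.commute)
  also have "\<dots> = cinner (A *v x) y"
    by (simp add: cinner_def matrix_vector_mult_def sum_distrib_right)
  finally show ?thesis .
qed

lemma hermitian_qform_real:
  assumes "hermitian A" shows "qform A x = complex_of_real (Re (qform A x))"
proof -
  have "qform A x = cinner (A *v x) x" unfolding qform_cinner by (rule cinner_hermitian[OF assms])
  also have "\<dots> = cnj (qform A x)" unfolding qform_cinner by (rule cinner_commute)
  finally have "qform A x = cnj (qform A x)" .
  then have "Im (qform A x) = 0" by (metis cnj.simps(2) neg_equal_zero)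
  then show ?thesis by (simp add: complex_eq_iff)
qed

lemma hermitian_diff:
  assumes "hermitian A" "hermitian B" shows "hermitian (A - B)"
  unfolding hermitian_def
proof (intro allI)
  fix i j
  have "A$i$j = cnj (A$j$i)" "B$i$j = cnj (B$j$i)" using assms unfolding hermitian_def by blast+
  then show "(A - B)$i$j = cnj ((A - B)$j$i)" by simp
qed

lemma psd_hermitian:
  assumes "psd A" shows "hermitian A"
  unfolding hermitian_def
proof (intro allI)
  fix i j
  have im: "Im (qform A x) = 0" for x using assms psd_def by blast
  have diag: "Im (A$k$k) = 0" for k using im[of "axis k 1 + 0 *s axis k 1"] unfolding qform_axis by simp
  have "Im (A$i$j + A$j$i) = 0" using im[of "axis i 1 + 1 *s axis j 1"] diag[of i] diag[of j]
    unfolding qform_axis by simp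
  moreover have "Re (A$i$j - A$j$i) = 0" using im[of "axis i 1 + \<i> *s axis j 1"] diag[of i] diag[of j]
    unfolding qform_axis by (simp add: algebra_simps)
  ultimately show "A$i$j = cnj (A$j$i)" by (simp add: complex_eq_iff)
qed

lemma psd_add: "psd A \<Longrightarrow> psd B \<Longrightarrow> psd (A + B)"
  unfolding psd_def qform_add by simp

lemma psd_0: "psd 0"
  unfolding psd_def by simp

lemma psd_scaleR: "r \<ge> 0 \<Longrightarrow> psd A \<Longrightarrow> psd ((r::real) *\<^sub>R A)"
  unfolding psd_def qform_scaleR by simp

lemma psd_diag: "psd X \<Longrightarrow> Im (X$i$i) = 0 \<and> Re (X$i$i) \<ge> 0"
  unfolding psd_def using qform_axis[of X i 0 i] by (metis add.right_neutral mult_zero_left complex_cnj_zero)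

lemma psd_sum: "(\<And>t. t \<in> T \<Longrightarrow> psd (M t)) \<Longrightarrow> psd (\<Sum>t\<in>T. M t)"
  by (induction T rule: infinite_finite_induct) (auto intro: psd_add psd_0)

lemma outer_matrix_vector_mult: "outer v *v x = cinner v x *s v"
  by (simp add: vec_eq_iff outer_def matrix_vector_mult_def cinner_def sum_distrib_left
      sum_distrib_right mult_ac)

lemma qform_outer: "qform (outer v) x = complex_of_real ((cmod (cinner v x))\<^sup>2)"
proof -
  have "qform (outer v) x = cinner v x * cinner x v"
    unfolding qform_cinner outer_matrix_vector_mult by (simp add: cinner_scale_right)
  also have "\<dots> = complex_of_real ((cmod (cinner v x))\<^sup>2)"
    using cinner_commute[of x v] complex_norm_square[of "cinner v x"] by simp
  finally show ?thesis .
qed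

lemma psd_outer: "psd (outer v)"
  unfolding psd_def qform_outer by simp

lemma outer_idem: "cinner v v = 1 \<Longrightarrow> outer v ** outer v = outer v"
  by (subst matrix_eq)
    (simp add: matrix_vector_mul_assoc[symmetric] outer_matrix_vector_mult vector_scalar_commute
      cinner_scale_right)

lemma trace_outer: "trace (outer v) = cinner v v"
  by (simp add: trace_def outer_def cinner_def mult.commute)

section \<open>Spectral theorem and square roots\<close>

definition orthonormal :: "(complex^'n) set \<Rightarrow> bool" where
  "orthonormal U \<longleftrightarrow> (\<forall>u\<in>U. cinner u u = 1) \<and> (\<forall>u\<in>U. \<forall>w\<in>U. u \<noteq> w \<longrightarrow> cinner u w = 0)"

definition orthonormal_eigenvectors :: "complex^'n^'n \<Rightarrow> (complex^'n) set \<Rightarrow> bool" where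
  "orthonormal_eigenvectors A U \<longleftrightarrow> finite U \<and> orthonormal U \<and> (\<forall>u\<in>U. A *v u = qform A u *s u)"

lemma orthonormal_finite_card:
  fixes U :: "(complex^'n) set"
  assumes "orthonormal U" shows "finite U \<and> card U \<le> DIM(complex^'n)"
proof -
  have "pairwise orthogonal U"
    using assms unfolding orthonormal_def pairwise_def orthogonal_def inner_vec_eq_Re_cinner by auto
  moreover have "0 \<notin> U" using assms unfolding orthonormal_def by force
  ultimately have "independent U" by (rule pairwise_orthogonal_independent)
  then show ?thesis by (rule independent_bound)
qed

lemma orthonormal_sum_cinner:
  assumes "orthonormal U" "finite U" "w \<in> U"
  shows "(\<Sum>u\<in>U. c u * cinner w u) = c w"
proof -
  have "(\<Sum>u\<in>U. c u * cinner w u) = (\<Sum>u\<in>U. if u = w then c u else 0)"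
    using assms unfolding orthonormal_def by (intro sum.cong) auto
  also have "\<dots> = c w" using assms by simp
  finally show ?thesis .
qed

lemma cinner_normalize:
  assumes "x \<noteq> 0"
  defines "c \<equiv> complex_of_real (1 / sqrt (Re (cinner x x)))"
  shows "cinner (c *s x) (c *s x) = 1"
proof -
  define r where "r = Re (cinner x x)"
  have pos: "r > 0" unfolding r_def using assms cinner_self_pos by blast
  have "cinner (c *s x) (c *s x) = cnj c * c * cinner x x"
    by (simp add: cinner_scale_left cinner_scale_right)
  also have "\<dots> = complex_of_real (1 / sqrt r * (1 / sqrt r) * r)"
    unfolding c_def r_def by (subst cinner_self_real) (simp only: complex_cnj_complex_of_real of_real_mult)
  also have "1 / sqrt r * (1 / sqrt r) * r = 1" using pos by (simp add: field_simps)
  finally show ?thesis by simp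
qed

text \<open>A maximiser of the Rayleigh quotient is an eigenvector: otherwise moving it a little in
  the direction of its residual increases the quotient at first order.\<close>

lemma rayleigh_maximizer_eigenvector:
  fixes A :: "complex^'n^'n" and w :: "complex^'n"
  defines "z \<equiv> A *v w - qform A w *s w"
  assumes h: "hermitian A" and w: "cinner w w = 1"
    and max: "\<And>t::real. Re (qform A (w + complex_of_real t *s z))
      \<le> Re (qform A w) * Re (cinner (w + complex_of_real t *s z) (w + complex_of_real t *s z))"
  shows "A *v w = qform A w *s w"
proof (rule ccontr)
  assume "A *v w \<noteq> qform A w *s w"
  then have "z \<noteq> 0" unfolding z_def by simp
  define lam where "lam = qform A w"
  define nz where "nz = Re (cinner z z)"
  have nz: "nz > 0" using \<open>z \<noteq> 0\<close> cinner_self_pos nz_def by blast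
  have czz: "cinner z z = complex_of_real nz" unfolding nz_def by (rule cinner_self_real)
  have Aw: "A *v w = z + lam *s w" unfolding z_def lam_def by simp
  have wz: "cinner w z = 0"
    unfolding z_def by (simp add: cinner_diff_right cinner_scale_right w qform_cinner)
  have zw: "cinner z w = 0" using wz cinner_commute by (metis complex_cnj_zero)
  have zAw: "cinner z (A *v w) = complex_of_real nz"
    unfolding Aw by (simp add: cinner_add_right cinner_scale_right zw czz)
  have wAz: "cinner w (A *v z) = complex_of_real nz"
    using cinner_hermitian[OF h, of w z] cinner_commute[of "A *v w" z] zAw by simp
  define D where "D = Re lam * nz - Re (qform A z)"
  define t where "t = nz / (\<bar>D\<bar> + 1)"
  have t0: "t > 0" unfolding t_def using nz by (simp add: add_pos_nonneg)
  have "t * D \<le> t * \<bar>D\<bar>" using t0 by (simp add: mult_left_mono)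
  also have "\<dots> < nz" unfolding t_def using nz by (simp add: field_simps)
  finally have tD: "t * D < nz" .
  define x where "x = w + complex_of_real t *s z"
  have "cinner x x = complex_of_real (1 + t\<^sup>2 * nz)"
    unfolding x_def by (simp add: cinner_add_left cinner_add_right cinner_scale_left
        cinner_scale_right w wz zw czz power2_eq_square)
  moreover have "qform A x = lam + complex_of_real (2 * t * nz) + complex_of_real (t\<^sup>2) * qform A z"
    unfolding x_def qform_cinner matrix_vector_right_distrib vector_scalar_commute
    by (simp add: cinner_add_left cinner_add_right cinner_scale_left cinner_scale_right
        lam_def qform_cinner zAw wAz power2_eq_square algebra_simps)
  ultimately have "Re lam + 2 * t * nz + t\<^sup>2 * Re (qform A z) \<le> Re lam * (1 + t\<^sup>2 * nz)"
    using max[of t] unfolding x_def[symmetric] lam_def by simp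
  then have "2 * t * nz \<le> t * (t * D)" unfolding D_def by (simp add: algebra_simps power2_eq_square)
  then have "2 * nz \<le> t * D" using t0 by simp
  then show False using tD nz by simp
qed

lemma rayleigh_maximizer_exists:
  fixes A :: "complex^'n^'n"
  assumes y: "y \<noteq> 0" and yU: "\<forall>u\<in>U. cinner u y = 0"
  obtains w where "cinner w w = 1" "\<forall>u\<in>U. cinner u w = 0"
    "\<And>x. \<forall>u\<in>U. cinner u x = 0 \<Longrightarrow> Re (qform A x) \<le> Re (qform A w) * Re (cinner x x)"
proof -
  define V where "V = {x::complex^'n. \<forall>u\<in>U. cinner u x = 0}"
  define K where "K = {x. cinner x x = 1} \<inter> V"
  have Kc: "compact K"
  proof (subst compact_eq_bounded_closed, rule conjI)
    show "bounded K"
      unfolding K_def bounded_iff by (intro exI[of _ 1]) (auto simp: norm_eq_1_if_cinner_self)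
    have "K = {x. cinner x x = 1} \<inter> (\<Inter>u\<in>U. {x. cinner u x = 0})" unfolding K_def V_def by auto
    moreover have "closed {x::complex^'n. cinner x x = 1}"
      by (intro closed_Collect_eq continuous_intros)
    moreover have "closed {x::complex^'n. cinner u x = 0}" for u
      by (intro closed_Collect_eq continuous_intros)
    ultimately show "closed K" by auto
  qed
  have Kne: "K \<noteq> {}"
  proof -
    have "complex_of_real (1 / sqrt (Re (cinner y y))) *s y \<in> K"
      using cinner_normalize[OF y] yU unfolding K_def V_def by (simp add: cinner_scale_right)
    then show ?thesis by blast
  qed
  have "continuous_on K (\<lambda>x. Re (qform A x))"
    unfolding qform_cinner by (intro continuous_intros)
  then obtain w where wK: "w \<in> K" and wmax: "\<And>x. x \<in> K \<Longrightarrow> Re (qform A x) \<le> Re (qform A w)"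
    using continuous_attains_sup[OF Kc Kne] by blast
  have "Re (qform A x) \<le> Re (qform A w) * Re (cinner x x)" if "x \<in> V" for x
  proof (cases "x = 0")
    case False
    define c where "c = complex_of_real (1 / sqrt (Re (cinner x x)))"
    have pos: "Re (cinner x x) > 0" using False cinner_self_pos by blast
    have "c *s x \<in> K" using cinner_normalize[OF False] that
      unfolding K_def V_def c_def by (simp add: cinner_scale_right)
    then have "Re (cnj c * c * qform A x) \<le> Re (qform A w)" using wmax qform_scale by metis
    then show ?thesis using pos unfolding c_def by (simp add: field_simps)
  qed (simp add: qform_cinner)
  moreover have "cinner w w = 1" "\<forall>u\<in>U. cinner u w = 0" using wK unfolding K_def V_def by simp_all
  ultimately show ?thesis using that unfolding V_def by blast
qed

lemma orthonormal_eigenvectors_extend: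
  fixes A :: "complex^'n^'n"
  assumes h: "hermitian A" and e: "orthonormal_eigenvectors A U"
    and y: "y \<noteq> 0" and yU: "\<forall>u\<in>U. cinner u y = 0"
  shows "\<exists>w. w \<notin> U \<and> orthonormal_eigenvectors A (insert w U)"
proof -
  obtain w where w1: "cinner w w = 1" and wU: "\<forall>u\<in>U. cinner u w = 0"
    and max: "\<And>x. \<forall>u\<in>U. cinner u x = 0 \<Longrightarrow> Re (qform A x) \<le> Re (qform A w) * Re (cinner x x)"
    using rayleigh_maximizer_exists[OF y yU] by blast
  have eigU: "A *v u = qform A u *s u" if "u \<in> U" for u
    using e that unfolding orthonormal_eigenvectors_def by blast
  have "cinner u (A *v w - qform A w *s w) = 0" if "u \<in> U" for u
  proof -
    have "cinner u (A *v w) = cinner (qform A u *s u) w"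
      unfolding cinner_hermitian[OF h] eigU[OF that] ..
    then show ?thesis using wU that by (simp add: cinner_diff_right cinner_scale_right cinner_scale_left)
  qed
  then have "\<forall>u\<in>U. cinner u (w + complex_of_real t *s (A *v w - qform A w *s w)) = 0" for t
    using wU by (simp only: cinner_add_right cinner_scale_right) simp
  then have eig: "A *v w = qform A w *s w"
    using max by (intro rayleigh_maximizer_eigenvector[OF h w1]) blast
  have "cinner w u = 0" if "u \<in> U" for u
    using wU that cinner_commute[of w u] by simp
  then have "orthonormal_eigenvectors A (insert w U)"
    using e w1 wU eig unfolding orthonormal_eigenvectors_def orthonormal_def by auto
  moreover have "w \<notin> U" using wU w1 by fastforce
  ultimately show ?thesis by blast
qed

theorem hermitian_eigenbasis:
  fixes A :: "complex^'n^'n"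
  assumes h: "hermitian A"
  obtains U where "orthonormal_eigenvectors A U" "\<And>x. x = (\<Sum>u\<in>U. cinner u x *s u)"
proof -
  define P where "P k \<longleftrightarrow> (\<exists>U. orthonormal_eigenvectors A U \<and> card U = k)" for k
  have "P 0" unfolding P_def orthonormal_eigenvectors_def orthonormal_def by (intro exI[of _ "{}"]) simp
  moreover have "k \<le> DIM(complex^'n)" if "P k" for k
  proof -
    obtain U where "orthonormal_eigenvectors A U" "card U = k" using \<open>P k\<close> unfolding P_def by blast
    then show ?thesis using orthonormal_finite_card[of U] unfolding orthonormal_eigenvectors_def by simp
  qed
  ultimately obtain k where "P k" and kmax: "\<And>k'. P k' \<Longrightarrow> k' \<le> k"
    using Nat.ex_has_greatest_nat[of P 0 "DIM(complex^'n)"] by blast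
  then obtain U where e: "orthonormal_eigenvectors A U" and cU: "card U = k" using P_def by blast
  have fU: "finite U" and oU: "orthonormal U" using e unfolding orthonormal_eigenvectors_def by auto
  have "x = (\<Sum>u\<in>U. cinner u x *s u)" for x
  proof (rule ccontr)
    define y where "y = x - (\<Sum>u\<in>U. cinner u x *s u)"
    assume "x \<noteq> (\<Sum>u\<in>U. cinner u x *s u)"
    then have "y \<noteq> 0" using y_def by simp
    moreover have "cinner w y = 0" if "w \<in> U" for w
    proof -
      have "cinner w (\<Sum>u\<in>U. cinner u x *s u) = (\<Sum>u\<in>U. cinner u x * cinner w u)"
        by (simp add: cinner_sum_right cinner_scale_right)
      also have "\<dots> = cinner w x" by (rule orthonormal_sum_cinner[OF oU fU that])
      finally show ?thesis unfolding y_def by (simp add: cinner_diff_right)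
    qed
    ultimately obtain w where wU: "w \<notin> U" and "orthonormal_eigenvectors A (insert w U)"
      using orthonormal_eigenvectors_extend[OF h e] by blast
    moreover have "card (insert w U) = Suc k" using wU fU cU by simp
    ultimately have "P (Suc k)" unfolding P_def by blast
    then show False using kmax by fastforce
  qed
  then show ?thesis using e that by blast
qed

lemma sum_matrix_vector_mult: "(\<Sum>u\<in>U. M u) *v x = (\<Sum>u\<in>U. M u *v x)"
  by (induction U rule: infinite_finite_induct) (auto simp: matrix_vector_mult_add_rdistrib)

lemma spectral_sum_apply:
  "(\<Sum>u\<in>U. s u *\<^sub>R outer u) *v x = (\<Sum>u\<in>U. (complex_of_real (s u) * cinner u x) *s u)"
  unfolding sum_matrix_vector_mult matrix_scaleR_vector_mult outer_matrix_vector_mult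
  by (simp add: vector_smult_assoc)

lemma spectral_sum_eigenvector:
  assumes "finite U" "orthonormal U" "w \<in> U"
  shows "(\<Sum>u\<in>U. s u *\<^sub>R outer u) *v w = complex_of_real (s w) *s w"
proof -
  have "(\<Sum>u\<in>U. s u *\<^sub>R outer u) *v w = (\<Sum>u\<in>U. if u = w then complex_of_real (s w) *s w else 0)"
    unfolding spectral_sum_apply using assms unfolding orthonormal_def by (intro sum.cong) auto
  also have "\<dots> = complex_of_real (s w) *s w" using assms by simp
  finally show ?thesis .
qed

theorem hermitian_spectral_decomposition:
  fixes A :: "complex^'n^'n"
  assumes h: "hermitian A"
  obtains U where "finite U" "orthonormal U" "A = (\<Sum>u\<in>U. Re (qform A u) *\<^sub>R outer u)"
proof -
  obtain U where e: "orthonormal_eigenvectors A U" and c: "\<And>x. x = (\<Sum>u\<in>U. cinner u x *s u)"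
    using hermitian_eigenbasis[OF h] by blast
  have "A *v x = (\<Sum>u\<in>U. Re (qform A u) *\<^sub>R outer u) *v x" for x
  proof -
    have "A *v x = (\<Sum>u\<in>U. cinner u x *s (A *v u))"
      by (subst c) (simp add: matrix_vector_mult_sum vector_scalar_commute)
    also have "\<dots> = (\<Sum>u\<in>U. (complex_of_real (Re (qform A u)) * cinner u x) *s u)"
      using e hermitian_qform_real[OF h] unfolding orthonormal_eigenvectors_def
      by (intro sum.cong refl) (metis mult.commute vector_smult_assoc)
    finally show ?thesis unfolding spectral_sum_apply .
  qed
  then have "A = (\<Sum>u\<in>U. Re (qform A u) *\<^sub>R outer u)" by (simp add: matrix_eq)
  then show ?thesis using e that unfolding orthonormal_eigenvectors_def by blast
qed

lemma spectral_sum_mult: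
  assumes "finite U" "orthonormal U"
  shows "(\<Sum>u\<in>U. s u *\<^sub>R outer u) ** (\<Sum>u\<in>U. t u *\<^sub>R outer u) = (\<Sum>u\<in>U. (s u * t u) *\<^sub>R outer u)"
proof (subst matrix_eq, intro allI)
  fix x
  have "((\<Sum>u\<in>U. s u *\<^sub>R outer u) ** (\<Sum>u\<in>U. t u *\<^sub>R outer u)) *v x
      = (\<Sum>u\<in>U. (complex_of_real (t u) * cinner u x) *s ((\<Sum>u\<in>U. s u *\<^sub>R outer u) *v u))"
    by (simp add: matrix_vector_mul_assoc[symmetric] spectral_sum_apply[of t] matrix_vector_mult_sum
        vector_scalar_commute)
  also have "\<dots> = (\<Sum>u\<in>U. (complex_of_real (s u * t u) * cinner u x) *s u)"
    using spectral_sum_eigenvector[OF assms] by (intro sum.cong refl) (simp add: vector_smult_assoc mult_ac)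
  finally show "((\<Sum>u\<in>U. s u *\<^sub>R outer u) ** (\<Sum>u\<in>U. t u *\<^sub>R outer u)) *v x
      = (\<Sum>u\<in>U. (s u * t u) *\<^sub>R outer u) *v x"
    unfolding spectral_sum_apply .
qed

lemma psd_sqrt_exists:
  assumes "psd A" shows "\<exists>B. psd B \<and> B ** B = A"
proof -
  obtain U where fU: "finite U" and oU: "orthonormal U"
    and A: "A = (\<Sum>u\<in>U. Re (qform A u) *\<^sub>R outer u)"
    using hermitian_spectral_decomposition[OF psd_hermitian[OF assms]] by blast
  define B where "B = (\<Sum>u\<in>U. sqrt (Re (qform A u)) *\<^sub>R outer u)"
  have nonneg: "Re (qform A u) \<ge> 0" for u using assms unfolding psd_def by blast
  have "psd B" unfolding B_def using nonneg by (intro psd_sum psd_scaleR psd_outer) simp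
  moreover have "B ** B = A"
    unfolding B_def spectral_sum_mult[OF fU oU] using nonneg by (subst A) (simp flip: power2_eq_square)
  ultimately show ?thesis by blast
qed

lemma psd_sqrt_unique:
  assumes B: "psd B" and C: "psd C" and eq: "B ** B = C ** C"
  shows "B = C"
proof -
  have hB: "hermitian B" and hC: "hermitian C" using B C psd_hermitian by auto
  define D where "D = B - C"
  obtain U where fU: "finite U" and oU: "orthonormal U"
    and D: "D = (\<Sum>u\<in>U. Re (qform D u) *\<^sub>R outer u)"
    using hermitian_spectral_decomposition[OF hermitian_diff[OF hB hC]] unfolding D_def by blast
  have "Re (qform D u) = 0" if u: "u \<in> U" for u
  proof -
    define d where "d = Re (qform D u)"
    have uu: "cinner u u = 1" using oU u unfolding orthonormal_def by blast
    have "D *v u = complex_of_real d *s u"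
      unfolding d_def by (subst D) (rule spectral_sum_eigenvector[OF fU oU u])
    then have bc: "B *v u = C *v u + complex_of_real d *s u"
      unfolding D_def by (simp add: matrix_vector_mult_diff_rdistrib diff_eq_eq add.commute)
    have "cinner (B *v u) (B *v u) = cinner u ((B ** B) *v u)"
      by (simp add: cinner_hermitian[OF hB] matrix_vector_mul_assoc[symmetric])
    also have "\<dots> = cinner (C *v u) (C *v u)"
      by (simp add: eq cinner_hermitian[OF hC] matrix_vector_mul_assoc[symmetric])
    finally have same_norm: "cinner (B *v u) (B *v u) = cinner (C *v u) (C *v u)" .
    define g where "g = Re (qform C u)"
    have g1: "cinner u (C *v u) = complex_of_real g"
      using hermitian_qform_real[OF hC, of u] unfolding g_def qform_cinner .
    then have g2: "cinner (C *v u) u = complex_of_real g" using cinner_commute[of "C *v u" u] by simp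
    note g = g1 g2
    have "cinner (B *v u) (B *v u) = cinner (C *v u) (C *v u) + complex_of_real (d * (2 * g + d))"
      unfolding bc by (simp add: cinner_add_left cinner_add_right cinner_scale_left cinner_scale_right
          g uu algebra_simps)
    then have "complex_of_real (d * (2 * g + d)) = 0" using same_norm by simp
    then have "d * (2 * g + d) = 0" by (simp only: of_real_eq_0_iff)
    moreover have "g \<ge> 0" using C unfolding g_def psd_def by blast
    moreover have "Re (cinner u (B *v u)) = g + d"
      unfolding bc by (simp add: cinner_add_right cinner_scale_right g uu)
    then have "g + d \<ge> 0" using B unfolding psd_def qform_cinner by metis
    ultimately show ?thesis unfolding d_def by (smt (verit) mult_eq_0_iff)
  qed
  then have "D = (\<Sum>u\<in>U. 0 *\<^sub>R outer u)" by (subst D) (rule sum.cong, simp_all)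
  then show ?thesis unfolding D_def by simp
qed

lemma msqrt:
  assumes "psd A" shows "psd (msqrt A)" "msqrt A ** msqrt A = A"
proof -
  obtain B where B: "psd B" "B ** B = A" using psd_sqrt_exists[OF assms] by blast
  have ex: "\<exists>!B. psd B \<and> B ** B = A"
  proof (rule ex1I[of _ B])
    show "psd B \<and> B ** B = A" using B by blast
    show "C = B" if "psd C \<and> C ** C = A" for C using that B psd_sqrt_unique[of C B] by simp
  qed
  show "psd (msqrt A)" "msqrt A ** msqrt A = A" using theI'[OF ex] unfolding msqrt_def by auto
qed

lemma msqrt_unique: "psd A \<Longrightarrow> psd B \<Longrightarrow> B ** B = A \<Longrightarrow> msqrt A = B"
  using msqrt[of A] psd_sqrt_unique[of "msqrt A" B] by simp

section \<open>Fidelity with a pure state\<close>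

lemma trace_scaleR: "trace ((r::real) *\<^sub>R (A::complex^'n^'n)) = complex_of_real r * trace A"
  by (simp add: trace_def sum_distrib_left scaleR_conv_of_real[where 'a = complex])

lemma adj_mult_hermitian:
  assumes "hermitian A" "hermitian B" shows "adj (A ** B) = B ** A"
proof -
  have "cnj ((A ** B)$j$i) = (B ** A)$i$j" for i j
  proof -
    have "cnj (A$j$k) = A$k$j" "cnj (B$k$i) = B$i$k" for k
      using assms unfolding hermitian_def by (metis complex_cnj_cnj)+
    then show ?thesis by (simp add: matrix_matrix_mult_def mult.commute)
  qed
  then show ?thesis by (simp add: adj_def vec_eq_iff)
qed

lemma outer_sandwich:
  assumes "hermitian T"
  shows "outer v ** T ** outer v = Re (qform T v) *\<^sub>R outer v"
proof (subst matrix_eq, intro allI)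
  fix x
  have "(outer v ** T ** outer v) *v x = (cinner v x * qform T v) *s v"
    by (simp add: matrix_vector_mul_assoc[symmetric] outer_matrix_vector_mult vector_scalar_commute
        qform_cinner vector_smult_assoc mult.commute)
  also have "\<dots> = (Re (qform T v) *\<^sub>R outer v) *v x"
    by (subst hermitian_qform_real[OF assms])
      (simp add: matrix_scaleR_vector_mult outer_matrix_vector_mult vector_smult_assoc mult.commute)
  finally show "(outer v ** T ** outer v) *v x = (Re (qform T v) *\<^sub>R outer v) *v x" .
qed

text \<open>With S the square root of \<tau> and P = outer v, adj (S P) (S P) = P \<tau> P = q P for
  q = \<langle>v, \<tau> v\<rangle>, whose square root is \<surd>q P.\<close>

lemma fidelity_pure:
  assumes t: "density \<tau>" and v: "cinner v v = 1"
  shows "fidelity \<tau> (outer v) = Re (qform \<tau> v)"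
proof -
  have pt: "psd \<tau>" using t density_def by blast
  define S where "S = msqrt \<tau>"
  have pS: "psd S" and SS: "S ** S = \<tau>" using msqrt[OF pt] S_def by auto
  define q where "q = Re (qform \<tau> v)"
  have q0: "q \<ge> 0" using pt unfolding q_def psd_def by blast
  have "adj (S ** outer v) ** (S ** outer v) = outer v ** (S ** S) ** outer v"
    by (simp add: adj_mult_hermitian psd_hermitian[OF pS] psd_hermitian[OF psd_outer] matrix_mul_assoc)
  also have "\<dots> = q *\<^sub>R outer v"
    unfolding SS q_def by (rule outer_sandwich[OF psd_hermitian[OF pt]])
  finally have SP: "adj (S ** outer v) ** (S ** outer v) = q *\<^sub>R outer v" .
  have "(sqrt q *\<^sub>R outer v) ** (sqrt q *\<^sub>R outer v) = q *\<^sub>R outer v"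
    using q0 outer_idem[OF v] by (simp add: matrix_scalar_ac scalar_matrix_assoc[symmetric])
  then have "msqrt (q *\<^sub>R outer v) = sqrt q *\<^sub>R outer v"
    using q0 by (intro msqrt_unique psd_scaleR psd_outer) auto
  then have "trace_norm (S ** outer v) = sqrt q"
    unfolding trace_norm_def SP by (simp add: trace_scaleR trace_outer v)
  moreover have "msqrt (outer v) = outer v" by (rule msqrt_unique[OF psd_outer psd_outer outer_idem[OF v]])
  ultimately show ?thesis using q0 unfolding fidelity_def S_def q_def by simp
qed

lemma psd_trace: "psd X \<Longrightarrow> Im (trace X) = 0 \<and> Re (trace X) \<ge> 0"
  unfolding trace_def using psd_diag by (auto simp: Im_sum Re_sum intro: sum_nonneg)

lemma psd_trace_real: "psd X \<Longrightarrow> trace X = complex_of_real (Re (trace X))"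
  using psd_trace[of X] by (simp add: complex_eq_iff)

lemma psd_diag_le_trace: "psd X \<Longrightarrow> Re (X$i$i) \<le> Re (trace X)"
  unfolding trace_def Re_sum using psd_diag by (intro member_le_sum) auto

lemma psd_entry_le_trace:
  assumes p: "psd X" shows "cmod (X$i$j) \<le> Re (trace X)"
proof (cases "X$i$j = 0")
  case True then show ?thesis using psd_trace[OF p] by simp
next
  case False
  define w where "w = X$i$j"
  have wji: "X$j$i = cnj w"
    unfolding w_def using psd_hermitian[OF p] unfolding hermitian_def by (metis complex_cnj_cnj)
  define c where "c = - cnj w / complex_of_real (cmod w)"
  have nw: "cmod w > 0" using False w_def by simp
  have cw: "c * w = - complex_of_real (cmod w)"
    unfolding c_def using nw
    by (simp add: field_simps complex_norm_square[symmetric] power2_eq_square mult.commute)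
  have ccw: "cnj c * cnj w = - complex_of_real (cmod w)" using cw
    by (metis complex_cnj_complex_of_real complex_cnj_minus complex_cnj_mult)
  have cc: "cnj c * c = 1"
    unfolding c_def using nw by (simp add: field_simps complex_norm_square[symmetric] power2_eq_square)
  have "Re (qform X (axis i 1 + c *s axis j 1)) \<ge> 0" using p psd_def by blast
  then have "Re (X$i$i) + Re (X$j$j) - 2 * cmod w \<ge> 0"
    unfolding qform_axis w_def[symmetric] wji cw ccw cc by simp
  moreover have "Re (X$i$i) \<le> Re (trace X)" "Re (X$j$j) \<le> Re (trace X)"
    using psd_diag_le_trace[OF p] by auto
  ultimately show ?thesis unfolding w_def by simp
qed

lemma closed_psd: "closed {X::complex^'n^'n. psd X}"
proof -
  have "{X::complex^'n^'n. psd X} = (\<Inter>x. {X. Im (qform X x) = 0} \<inter> {X. Re (qform X x) \<ge> 0})"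
    unfolding psd_def by auto
  moreover have "closed {X::complex^'n^'n. Im (qform X x) = 0}" for x
    unfolding qform_def by (intro closed_Collect_eq continuous_intros)
  moreover have "closed {X::complex^'n^'n. Re (qform X x) \<ge> 0}" for x
    unfolding qform_def by (intro closed_Collect_le continuous_intros)
  ultimately show ?thesis by (simp add: closed_INT closed_Int)
qed

lemma continuous_on_trace [continuous_intros]:
  "continuous_on S f \<Longrightarrow> continuous_on S (\<lambda>x. trace (f x :: complex^'n^'n))"
  unfolding trace_def by (intro continuous_intros)

lemma closed_density: "closed {X::complex^'n^'n. density X}"
proof -
  have "{X::complex^'n^'n. density X} = {X. psd X} \<inter> {X. trace X = 1}" unfolding density_def by auto
  moreover have "closed {X::complex^'n^'n. trace X = 1}" by (intro closed_Collect_eq continuous_intros)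
  ultimately show ?thesis using closed_psd by auto
qed

lemma norm_le_sum_entries: "norm (X::complex^'n^'n) \<le> (\<Sum>i\<in>UNIV. \<Sum>j\<in>UNIV. cmod (X$i$j))"
proof -
  have "norm X \<le> (\<Sum>i\<in>UNIV. norm (X$i))" unfolding norm_vec_def by (rule L2_set_le_sum) simp
  also have "\<dots> \<le> (\<Sum>i\<in>UNIV. \<Sum>j\<in>UNIV. cmod (X$i$j))"
    unfolding norm_vec_def by (intro sum_mono L2_set_le_sum) simp
  finally show ?thesis .
qed

lemma psd_norm_le_trace:
  assumes "psd X" shows "norm (X::complex^'n^'n) \<le> real (CARD('n) * CARD('n)) * Re (trace X)"
proof -
  have "norm X \<le> (\<Sum>i\<in>(UNIV::'n set). \<Sum>j\<in>(UNIV::'n set). Re (trace X))"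
    using norm_le_sum_entries[of X] psd_entry_le_trace[OF assms] by (smt (verit, best) sum_mono)
  then show ?thesis by simp
qed

lemma compact_density: "compact {X::complex^'n^'n. density X}"
proof (subst compact_eq_bounded_closed, intro conjI closed_density)
  show "bounded {X::complex^'n^'n. density X}"
    unfolding bounded_iff
  proof (intro exI ballI)
    fix X :: "complex^'n^'n" assume "X \<in> {X. density X}"
    then show "norm X \<le> real (CARD('n) * CARD('n))"
      using psd_norm_le_trace[of X] unfolding density_def by simp
  qed
qed

lemma cmod_trace_le_norm: "cmod (trace (W::complex^'n^'n)) \<le> real CARD('n) * norm W"
proof -
  have "cmod (trace W) \<le> (\<Sum>i\<in>UNIV. cmod (W$i$i))" unfolding trace_def by (rule norm_sum)
  also have "\<dots> \<le> (\<Sum>i\<in>(UNIV::'n set). norm W)"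
  proof (rule sum_mono)
    fix i
    have "cmod (W$i$i) \<le> norm (W$i)" by (rule Finite_Cartesian_Product.norm_nth_le)
    also have "\<dots> \<le> norm W" by (rule Finite_Cartesian_Product.norm_nth_le)
    finally show "cmod (W$i$i) \<le> norm W" .
  qed
  finally show ?thesis by simp
qed

definition entry_sum :: "complex^'n^'n \<Rightarrow> real" where
  "entry_sum H = (\<Sum>i\<in>UNIV. \<Sum>k\<in>UNIV. cmod (H$i$k))"

lemma entry_sum_nonneg: "entry_sum H \<ge> 0"
  unfolding entry_sum_def by (intro sum_nonneg) auto

lemma cmod_trace_mult_le:
  assumes "psd X"
  shows "cmod (trace (H ** X)) \<le> entry_sum H * Re (trace X)"
proof -
  have "cmod (trace (H ** X)) = cmod (\<Sum>i\<in>UNIV. \<Sum>k\<in>UNIV. H$i$k * X$k$i)"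
    by (simp add: trace_def matrix_matrix_mult_def)
  also have "\<dots> \<le> (\<Sum>i\<in>UNIV. cmod (\<Sum>k\<in>UNIV. H$i$k * X$k$i))" by (rule norm_sum)
  also have "\<dots> \<le> (\<Sum>i\<in>UNIV. \<Sum>k\<in>UNIV. cmod (H$i$k) * Re (trace X))"
  proof (rule sum_mono)
    fix i
    have "cmod (\<Sum>k\<in>UNIV. H$i$k * X$k$i) \<le> (\<Sum>k\<in>UNIV. cmod (H$i$k * X$k$i))" by (rule norm_sum)
    also have "\<dots> \<le> (\<Sum>k\<in>UNIV. cmod (H$i$k) * Re (trace X))"
      by (rule sum_mono) (simp add: norm_mult mult_left_mono psd_entry_le_trace[OF assms])
    finally show "cmod (\<Sum>k\<in>UNIV. H$i$k * X$k$i) \<le> (\<Sum>k\<in>UNIV. cmod (H$i$k) * Re (trace X))" .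
  qed
  also have "\<dots> = entry_sum H * Re (trace X)"
    by (simp add: entry_sum_def sum_distrib_right)
  finally show ?thesis .
qed

section \<open>Measure-and-prepare maps\<close>

lemma cscale_add_left: "cscale (a + b) P = cscale a P + cscale b P"
  by (simp add: cscale_def vec_eq_iff distrib_right)

lemma cscale_add_right: "cscale c (A + B) = cscale c A + cscale c B"
  by (simp add: cscale_def vec_eq_iff distrib_left)

lemma cscale_mult: "cscale (a * b) P = cscale a (cscale b P)"
  by (simp add: cscale_def vec_eq_iff mult.assoc)

lemma cscale_of_real: "cscale (complex_of_real r) M = r *\<^sub>R M"
  by (simp add: cscale_def vec_eq_iff scaleR_conv_of_real[where 'a = complex])

lemma matrix_mult_cscale: "(H::complex^'n^'m) ** cscale c X = cscale c (H ** X)"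
  by (simp add: cscale_def vec_eq_iff matrix_matrix_mult_def sum_distrib_left mult.left_commute)

lemma trace_cscale: "trace (cscale c (M::complex^'n^'n)) = c * trace M"
  by (simp add: cscale_def trace_def sum_distrib_left)

lemma cscale_matrix_vector_mult: "cscale c (A::complex^'n^'m) *v w = c *s (A *v w)"
  by (simp add: cscale_def vec_eq_iff matrix_vector_mult_def sum_distrib_left mult.assoc)

lemma qform_cscale: "qform (cscale c M) u = c * qform M u"
  unfolding qform_cinner cscale_matrix_vector_mult cinner_scale_right ..

lemma trace_zero [simp]: "trace (0::'a::semiring_1^'n^'n) = 0"
  by (simp add: trace_def)

lemma trace_matrix_mult_sum: "trace ((H::complex^'n^'n) ** (\<Sum>t\<in>T. M t)) = (\<Sum>t\<in>T. trace (H ** M t))"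
  by (induction T rule: infinite_finite_induct) (auto simp: matrix_add_ldistrib trace_add)

definition trace_positive :: "complex^'n^'n \<Rightarrow> bool" where
  "trace_positive H \<longleftrightarrow> (\<forall>X. psd X \<longrightarrow> Im (trace (H ** X)) = 0 \<and> Re (trace (H ** X)) \<ge> 0)"

lemma trace_positive_real:
  "trace_positive H \<Longrightarrow> psd X \<Longrightarrow> trace (H ** X) = complex_of_real (Re (trace (H ** X)))"
  unfolding trace_positive_def by (simp add: complex_eq_iff)

lemma trace_positive_scaleR: "s \<ge> 0 \<Longrightarrow> trace_positive H \<Longrightarrow> trace_positive (s *\<^sub>R H)"
  unfolding trace_positive_def by (simp add: scalar_matrix_assoc[symmetric] trace_scaleR)

definition block_qform :: "nat \<Rightarrow> (nat \<Rightarrow> nat \<Rightarrow> complex^'n^'n) \<Rightarrow> (nat \<Rightarrow> complex^'n) \<Rightarrow> complex" where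
  "block_qform k X x = (\<Sum>i<k. \<Sum>j<k. cinner (x i) (X i j *v x j))"

lemma block_psd_iff: "block_psd k X \<longleftrightarrow> (\<forall>x. Im (block_qform k X x) = 0 \<and> Re (block_qform k X x) \<ge> 0)"
proof -
  have e: "cinner y (M *v z) = (\<Sum>a\<in>UNIV. \<Sum>b\<in>UNIV. cnj (y $ a) * M $ a $ b * z $ b)" for y z M
    by (simp add: cinner_def matrix_vector_mult_def sum_distrib_left mult.assoc)
  show ?thesis by (simp only: block_psd_def block_qform_def Let_def e)
qed

lemma block_psd_add: "block_psd k X \<Longrightarrow> block_psd k Y \<Longrightarrow> block_psd k (\<lambda>i j. X i j + Y i j)"
  unfolding block_psd_iff block_qform_def
  by (simp add: matrix_vector_mult_add_rdistrib cinner_add_right sum.distrib)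

text \<open>Writing P = S S, the block form of X \<mapsto> tr (H X) P at x is the sum over the
  coordinates g of tr (H Z g), where Z g is the compression of X to the scalars (S x i) g.\<close>

lemma block_psd_trace_prepare:
  fixes X :: "nat \<Rightarrow> nat \<Rightarrow> complex^'n^'n" and P :: "complex^'m^'m"
  assumes X: "block_psd k X" and H: "trace_positive H" and P: "psd P"
  shows "block_psd k (\<lambda>i j. cscale (trace (H ** X i j)) P)"
  unfolding block_psd_iff
proof
  fix x :: "nat \<Rightarrow> complex^'m"
  define S where "S = msqrt P"
  have pS: "psd S" and SS: "S ** S = P" using msqrt[OF P] S_def by auto
  define y where "y i = S *v x i" for i
  have Pxy: "cinner (x i) (P *v x j) = (\<Sum>g\<in>UNIV. cnj (y i $ g) * y j $ g)" for i j
  proof -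
    have "cinner (x i) (P *v x j) = cinner (x i) (S *v (S *v x j))"
      unfolding SS[symmetric] by (simp add: matrix_vector_mul_assoc)
    also have "\<dots> = cinner (y i) (y j)" unfolding y_def by (rule cinner_hermitian[OF psd_hermitian[OF pS]])
    finally show ?thesis unfolding cinner_def .
  qed
  define Z where "Z g = (\<Sum>i<k. \<Sum>j<k. cscale (cnj (y i $ g) * y j $ g) (X i j))" for g
  have "block_qform k (\<lambda>i j. cscale (trace (H ** X i j)) P) x
      = (\<Sum>i<k. \<Sum>j<k. \<Sum>g\<in>UNIV. (cnj (y i $ g) * y j $ g) * trace (H ** X i j))"
    unfolding block_qform_def cscale_matrix_vector_mult cinner_scale_right Pxy
    by (simp add: sum_distrib_left mult.commute)
  also have "\<dots> = (\<Sum>g\<in>UNIV. \<Sum>i<k. \<Sum>j<k. (cnj (y i $ g) * y j $ g) * trace (H ** X i j))"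
    by (subst sum.swap) (simp add: sum.swap[of _ "{..<k}" UNIV])
  also have "\<dots> = (\<Sum>g\<in>UNIV. trace (H ** Z g))"
    unfolding Z_def by (simp add: trace_matrix_mult_sum matrix_mult_cscale trace_cscale)
  finally have eq: "block_qform k (\<lambda>i j. cscale (trace (H ** X i j)) P) x = (\<Sum>g\<in>UNIV. trace (H ** Z g))" .
  have "psd (Z g)" for g
  proof -
    have "qform (Z g) u = block_qform k X (\<lambda>i. y i $ g *s u)" for u
      unfolding Z_def qform_sum qform_cscale block_qform_def
      by (simp add: vector_scalar_commute cinner_scale_left cinner_scale_right qform_cinner
          mult.assoc mult.left_commute)
    then show ?thesis using X unfolding block_psd_iff psd_def by simp
  qed
  then have "Im (trace (H ** Z g)) = 0 \<and> Re (trace (H ** Z g)) \<ge> 0" for g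
    using H unfolding trace_positive_def by blast
  then show "Im (block_qform k (\<lambda>i j. cscale (trace (H ** X i j)) P) x) = 0 \<and>
      Re (block_qform k (\<lambda>i j. cscale (trace (H ** X i j)) P) x) \<ge> 0"
    unfolding eq by (simp add: Im_sum Re_sum sum_nonneg)
qed

definition measure_prepare :: "complex^'n^'n \<Rightarrow> complex^'n^'n \<Rightarrow> complex^'m^'m \<Rightarrow> complex^'m^'m
    \<Rightarrow> complex^'n^'n \<Rightarrow> complex^'m^'m" where
  "measure_prepare Ha Hb P Q X = cscale (trace (Ha ** X)) P + cscale (trace (Hb ** X)) Q"

lemma completely_positive_measure_prepare:
  assumes "trace_positive Ha" "trace_positive Hb" "psd P" "psd Q"
  shows "completely_positive (measure_prepare Ha Hb P Q)"
  unfolding completely_positive_def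
proof (intro conjI allI impI)
  show "clinear_map (measure_prepare Ha Hb P Q)"
    unfolding clinear_map_def measure_prepare_def
    by (simp add: matrix_add_ldistrib trace_add cscale_add_left matrix_mult_cscale trace_cscale
        cscale_mult cscale_add_right)
  show "block_psd k (\<lambda>i j. measure_prepare Ha Hb P Q (X i j))" if "block_psd k X" for k X
    unfolding measure_prepare_def using assms that by (intro block_psd_add block_psd_trace_prepare)
qed

lemma trace_measure_prepare:
  "trace (measure_prepare Ha Hb P Q X) = trace (Ha ** X) * trace P + trace (Hb ** X) * trace Q"
  unfolding measure_prepare_def by (simp add: trace_add trace_cscale)

lemma measure_prepare_scaleR:
  "measure_prepare (s *\<^sub>R Ha) (s *\<^sub>R Hb) P Q X = s *\<^sub>R measure_prepare Ha Hb P Q X"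
proof -
  have "trace ((s *\<^sub>R H) ** X) = complex_of_real s * trace (H ** X)" for H
    by (simp add: scalar_matrix_assoc[symmetric] trace_scaleR)
  then show ?thesis unfolding measure_prepare_def
    by (simp add: cscale_mult cscale_of_real scaleR_add_right)
qed

text \<open>Turns the real-linear functionals X \<mapsto> inner A X produced by the separating hyperplane
  theorem into complex-linear ones, with the same values on Hermitian matrices.\<close>

definition hermitian_part :: "complex^'n^'n \<Rightarrow> complex^'n^'n" where
  "hermitian_part A = (\<chi> i k. (A$i$k + cnj (A$k$i)) / 2)"

lemma trace_hermitian_part:
  fixes A X :: "complex^'n^'n"
  assumes h: "hermitian X"
  shows "trace (hermitian_part A ** X) = complex_of_real (inner A X)"
proof -
  define S where "S = (\<Sum>i\<in>UNIV. \<Sum>k\<in>UNIV. A$i$k * cnj (X$i$k))"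
  have hx: "X$k$i = cnj (X$i$k)" for i k using h unfolding hermitian_def by blast
  have "trace (hermitian_part A ** X) = (\<Sum>i\<in>UNIV. \<Sum>k\<in>UNIV. (A$i$k + cnj (A$k$i)) / 2 * X$k$i)"
    by (simp add: trace_def matrix_matrix_mult_def hermitian_part_def)
  also have "\<dots> = (\<Sum>i\<in>UNIV. \<Sum>k\<in>UNIV. A$i$k * X$k$i) / 2
      + (\<Sum>i\<in>UNIV. \<Sum>k\<in>UNIV. cnj (A$k$i) * X$k$i) / 2"
    by (simp add: sum_divide_distrib sum.distrib distrib_right add_divide_distrib)
  also have "(\<Sum>i\<in>UNIV. \<Sum>k\<in>UNIV. A$i$k * X$k$i) = S"
  proof -
    have "A$i$k * X$k$i = A$i$k * cnj (X$i$k)" for i k using hx[of k i] by simp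
    then show ?thesis unfolding S_def by (simp only:)
  qed
  also have "(\<Sum>i\<in>UNIV. \<Sum>k\<in>UNIV. cnj (A$k$i) * X$k$i) = (\<Sum>k\<in>UNIV. \<Sum>i\<in>UNIV. cnj (A$k$i) * X$k$i)"
    by (rule sum.swap)
  also have "\<dots> = cnj S" unfolding S_def by simp
  also have "S / 2 + cnj S / 2 = complex_of_real (Re S)"
    by (simp add: complex_eq_iff)
  also have "Re S = inner A X"
    unfolding S_def by (simp add: inner_vec_def inner_complex_def Re_sum)
  finally show ?thesis .
qed

lemma trace_positive_hermitian_part:
  fixes A :: "complex^'n^'n"
  assumes "\<And>P. psd P \<Longrightarrow> inner A P \<ge> 0"
  shows "trace_positive (hermitian_part A)"
  unfolding trace_positive_def
proof (intro allI impI)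
  fix X :: "complex^'n^'n" assume "psd X"
  then have "trace (hermitian_part A ** X) = complex_of_real (inner A X)" "inner A X \<ge> 0"
    using trace_hermitian_part psd_hermitian assms by auto
  then show "Im (trace (hermitian_part A ** X)) = 0 \<and> Re (trace (hermitian_part A ** X)) \<ge> 0" by simp
qed

lemma measure_prepare_hermitian_part:
  assumes "hermitian \<sigma>"
  shows "measure_prepare (hermitian_part A) (hermitian_part B) P Q \<sigma> = inner A \<sigma> *\<^sub>R P + inner B \<sigma> *\<^sub>R Q"
  unfolding measure_prepare_def trace_hermitian_part[OF assms] cscale_of_real ..

lemma free_cone_scaleR:
  assumes "x \<in> free_cone F" "r \<ge> 0" shows "r *\<^sub>R x \<in> free_cone F"
proof -
  obtain c s where "x = c *\<^sub>R s" "c \<ge> 0" "s \<in> F" using assms(1) free_cone_def by blast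
  then have "r *\<^sub>R x = (r * c) *\<^sub>R s" "r * c \<ge> 0" using assms(2) by auto
  then show ?thesis unfolding free_cone_def using \<open>s \<in> F\<close> by blast
qed

lemma free_cone_0: "F \<noteq> {} \<Longrightarrow> 0 \<in> free_cone F"
  unfolding free_cone_def by (auto intro!: exI[of _ "0::real"])

lemma free_cone_add:
  assumes c: "convex F" and x: "x \<in> free_cone F" and y: "y \<in> free_cone F"
  shows "x + y \<in> free_cone F"
proof -
  obtain c1 s1 where 1: "x = c1 *\<^sub>R s1" "c1 \<ge> 0" "s1 \<in> F" using x free_cone_def by blast
  obtain c2 s2 where 2: "y = c2 *\<^sub>R s2" "c2 \<ge> 0" "s2 \<in> F" using y free_cone_def by blast
  show ?thesis
  proof (cases "c1 + c2 = 0")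
    case True
    then have "c1 = 0" "c2 = 0" using 1 2 by auto
    then have "x + y = 0 *\<^sub>R s1" using 1 2 by simp
    then show ?thesis unfolding free_cone_def using 1 by blast
  next
    case False
    then have pos: "c1 + c2 > 0" using 1 2 by simp
    define s where "s = (c1 / (c1 + c2)) *\<^sub>R s1 + (c2 / (c1 + c2)) *\<^sub>R s2"
    have "s \<in> F" unfolding s_def using c 1 2 pos
      by (intro convexD) (auto simp: add_divide_distrib[symmetric])
    moreover have "x + y = (c1 + c2) *\<^sub>R s" unfolding s_def using 1 2 pos
      by (simp add: scaleR_add_right)
    ultimately show ?thesis unfolding free_cone_def using pos by (intro CollectI exI[of _ "c1 + c2"]) auto
  qed
qed

lemma convex_cone_free_cone:
  assumes "free_set F" shows "convex_cone (free_cone F)"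
  unfolding convex_cone_iff
proof (intro conjI ballI allI impI)
  show "0 \<in> free_cone F" using assms unfolding free_set_def by (intro free_cone_0) blast
  show "x + y \<in> free_cone F" if "x \<in> free_cone F" "y \<in> free_cone F" for x y
    using assms that unfolding free_set_def by (intro free_cone_add) auto
  show "c *\<^sub>R x \<in> free_cone F" if "x \<in> free_cone F" "c \<ge> 0" for x c
    using that by (rule free_cone_scaleR)
qed

lemma psd_if_free_cone: "free_set F \<Longrightarrow> x \<in> free_cone F \<Longrightarrow> psd x"
  unfolding free_cone_def free_set_def density_def by (auto intro: psd_scaleR)

lemma closed_free_cone:
  assumes "free_set F" shows "closed (free_cone F)"
proof -
  have "free_cone F = conic hull F" unfolding free_cone_def conic_hull_explicit ..
  moreover have "0 \<notin> F" using assms unfolding free_set_def density_def by force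
  moreover have "compact F"
    using assms compact_Int_closed[OF compact_density, of F] unfolding free_set_def
    by (metis (no_types, lifting) inf.absorb2 mem_Collect_eq subsetI)
  ultimately show ?thesis using closed_conic_hull by metis
qed

text \<open>An element of span F dominating a state has trace c \<ge> 1, so dividing it by c gives a
  state in the affine hull of F, which is free when F is affine.\<close>

lemma free_cone_if_span:
  fixes F :: "(complex^'n^'n) set"
  assumes fF: "free_set F" and aF: "affine_free F" and r: "density \<rho>"
    and X: "X \<in> span F" and p1: "psd (X - \<rho>)"
  shows "X \<in> free_cone F"
proof -
  obtain T u where T: "finite T" "T \<subseteq> F" and Xs: "X = (\<Sum>a\<in>T. u a *\<^sub>R a)"
    using X unfolding span_explicit by blast
  define c where "c = (\<Sum>a\<in>T. u a)"
  have "trace a = 1" if "a \<in> T" for a using that T fF unfolding free_set_def density_def by blast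
  then have trX: "trace X = complex_of_real c"
    unfolding Xs c_def by (induction T rule: infinite_finite_induct) (auto simp: trace_add trace_scaleR)
  have "Re (trace (X - \<rho>)) \<ge> 0" using psd_trace[OF p1] by simp
  then have c1: "c \<ge> 1" using r trX unfolding density_def by (simp add: trace_sub)
  have Tne: "T \<noteq> {}" using c1 unfolding c_def by auto
  define \<sigma> where "\<sigma> = (1 / c) *\<^sub>R X"
  have "\<sigma> \<in> affine hull F" unfolding affine_hull_explicit
  proof (intro CollectI exI conjI)
    show "finite T" "T \<noteq> {}" "T \<subseteq> F" using T Tne by auto
    show "(\<Sum>a\<in>T. u a / c) = 1" using c1 unfolding c_def by (simp add: sum_divide_distrib[symmetric])
    show "(\<Sum>a\<in>T. (u a / c) *\<^sub>R a) = \<sigma>" unfolding \<sigma>_def Xs by (simp add: scaleR_sum_right)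
  qed
  moreover have "density \<sigma>"
  proof -
    have "psd X" using psd_add[OF p1, of \<rho>] r unfolding density_def by simp
    then have "psd \<sigma>" unfolding \<sigma>_def using c1 by (intro psd_scaleR) auto
    moreover have "trace \<sigma> = 1" unfolding \<sigma>_def trace_scaleR trX using c1 by (simp flip: of_real_mult)
    ultimately show ?thesis unfolding density_def by simp
  qed
  ultimately have "\<sigma> \<in> F" using aF unfolding affine_free_def by blast
  moreover have "X = c *\<^sub>R \<sigma>" unfolding \<sigma>_def using c1 by simp
  moreover have "c \<ge> 0" using c1 by simp
  ultimately show ?thesis unfolding free_cone_def by blast
qed

lemma Rmax_ge_1:
  assumes "density X" "density Y"
  shows "Rmax X Y \<ge> 1"
  unfolding Rmax_def
proof (rule Inf_greatest, clarify)
  fix l assume "loewner_le X (l *\<^sub>R Y)"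
  then have "Re (trace (l *\<^sub>R Y - X)) \<ge> 0" unfolding loewner_le_def using psd_trace by blast
  then show "1 \<le> ereal l" using assms unfolding density_def by (simp add: trace_sub trace_scaleR)
qed

lemma Rmax_nonneg: "density X \<Longrightarrow> density Y \<Longrightarrow> Rmax X Y \<ge> 0"
  using Rmax_ge_1[of X Y] order_trans[of "0::ereal" 1] by simp

lemma Omega_ge_1:
  assumes F: "free_set F" and r: "density \<rho>"
  shows "Omega F \<rho> \<ge> 1"
  unfolding Omega_def
proof (rule INF_greatest)
  fix \<sigma> assume "\<sigma> \<in> F"
  then have s: "density \<sigma>" using F free_set_def by blast
  have "(1::ereal) = 1 * 1" by simp
  also have "\<dots> \<le> Rmax \<rho> \<sigma> * Rmax \<sigma> \<rho>"
    using Rmax_ge_1[OF r s] Rmax_ge_1[OF s r] Rmax_nonneg[OF r s]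
    by (intro ereal_mult_mono) auto
  finally show "1 \<le> Rmax \<rho> \<sigma> * Rmax \<sigma> \<rho>" .
qed

lemma Omega_le_if_sandwich:
  assumes F: "free_set F" and r: "density \<rho>" and K: "K \<ge> 0"
    and X: "X \<in> free_cone F" and lower: "psd (X - \<rho>)" and upper: "psd (K *\<^sub>R \<rho> - X)"
  shows "Omega F \<rho> \<le> ereal K"
proof -
  obtain c \<sigma> where Xc: "X = c *\<^sub>R \<sigma>" and sF: "\<sigma> \<in> F" using X free_cone_def by blast
  have s: "density \<sigma>" using F sF free_set_def by blast
  have "Re (trace (X - \<rho>)) \<ge> 0" using psd_trace[OF lower] by simp
  then have c1: "c \<ge> 1" using r s unfolding Xc density_def by (simp add: trace_sub trace_scaleR)
  have "Rmax \<rho> \<sigma> \<le> ereal c" unfolding Rmax_def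
    using lower Xc by (intro Inf_lower) (auto simp: loewner_le_def)
  moreover have "Rmax \<sigma> \<rho> \<le> ereal (K / c)"
  proof -
    have "(K / c) *\<^sub>R \<rho> - \<sigma> = (1 / c) *\<^sub>R (K *\<^sub>R \<rho> - X)" using c1 unfolding Xc
      by (simp add: scaleR_diff_right)
    then have "loewner_le \<sigma> ((K / c) *\<^sub>R \<rho>)" unfolding loewner_le_def
      using psd_scaleR[OF _ upper, of "1/c"] c1 by simp
    then show ?thesis unfolding Rmax_def by (intro Inf_lower) blast
  qed
  ultimately have "Rmax \<rho> \<sigma> * Rmax \<sigma> \<rho> \<le> ereal c * ereal (K / c)"
    using Rmax_nonneg[OF s r] c1 by (intro ereal_mult_mono) auto
  also have "\<dots> = ereal K" using c1 by simp
  finally show ?thesis using INF_lower[OF sF, of "\<lambda>\<sigma>. Rmax \<rho> \<sigma> * Rmax \<sigma> \<rho>"]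
    unfolding Omega_def by simp
qed

lemma std_robustness_ge_1:
  assumes F: "free_set F" and p: "density \<phi>"
  shows "std_robustness F \<phi> \<ge> 1"
  unfolding std_robustness_def RmaxF_def
proof (intro INF_greatest Inf_greatest, clarify)
  fix \<sigma> l assume sF: "\<sigma> \<in> F" and "free_le F \<phi> (l *\<^sub>R \<sigma>)"
  then have "Re (trace (l *\<^sub>R \<sigma> - \<phi>)) \<ge> 0"
    unfolding free_le_def using psd_if_free_cone[OF F] psd_trace by blast
  then show "1 \<le> ereal l" using p F sF unfolding density_def free_set_def by (simp add: trace_sub trace_scaleR)
qed

lemma gen_robustness_ge_1:
  assumes F: "free_set F" and p: "density \<phi>"
  shows "gen_robustness F \<phi> \<ge> 1"
  unfolding gen_robustness_def using F Rmax_ge_1[OF p] unfolding free_set_def by (intro INF_greatest) blast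

section \<open>Separating a state from the free cone\<close>

lemma convex_cone_separation:
  fixes M :: "'a::{real_inner,heine_borel} set"
  assumes M: "convex_cone M" and p: "p \<notin> closure M"
  shows "\<exists>a. inner a p < 0 \<and> (\<forall>m\<in>M. inner a m \<ge> 0)"
proof -
  have "convex M" using M unfolding convex_cone_def by blast
  then obtain a b where ap: "inner a p < b" and aM: "\<forall>x\<in>closure M. b < inner a x"
    using separating_hyperplane_closed_point[OF convex_closure closed_closure p] by blast
  then have aM': "b < inner a m" if "m \<in> M" for m using that closure_subset by blast
  then have b: "b < 0" using aM'[OF convex_cone_contains_0[OF M]] by simp
  have "inner a m \<ge> 0" if m: "m \<in> M" for m
  proof (rule ccontr)
    assume "\<not> inner a m \<ge> 0"
    then have neg: "inner a m < 0" by simp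
    have "b < inner a ((b / inner a m) *\<^sub>R m)"
      using neg b by (intro aM' convex_cone_scaleR[OF M _ m]) (simp add: divide_nonpos_neg less_imp_le)
    also have "\<dots> = b" using neg by simp
    finally show False by simp
  qed
  then show ?thesis using ap b by (intro exI[of _ a]) auto
qed

text \<open>Points of this cone close to (- \<rho>, 0) give elements of C lying approximately between
  \<rho> and K \<rho>; separating (- \<rho>, 0) from the cone gives the functionals of the Farkas-type
  lemma below.\<close>

definition sandwich_cone ::
  "complex^'n^'n \<Rightarrow> real \<Rightarrow> (complex^'n^'n) set \<Rightarrow> ((complex^'n^'n) \<times> (complex^'n^'n)) set" where
  "sandwich_cone \<rho> K C = {(P1 - X + t *\<^sub>R \<rho>, P2 + X - (t * K) *\<^sub>R \<rho>) | P1 P2 X t.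
     psd P1 \<and> psd P2 \<and> X \<in> C \<and> t \<ge> 0}"

lemma sandwich_coneI:
  "psd P1 \<Longrightarrow> psd P2 \<Longrightarrow> X \<in> C \<Longrightarrow> t \<ge> 0
    \<Longrightarrow> (P1 - X + t *\<^sub>R \<rho>, P2 + X - (t * K) *\<^sub>R \<rho>) \<in> sandwich_cone \<rho> K C"
  unfolding sandwich_cone_def by blast

lemma sandwich_cone_scaleR:
  assumes m: "m \<in> sandwich_cone \<rho> K C" and c: "c \<ge> 0" and C: "conic C"
  shows "c *\<^sub>R m \<in> sandwich_cone \<rho> K C"
proof -
  obtain P1 P2 X t where m: "m = (P1 - X + t *\<^sub>R \<rho>, P2 + X - (t * K) *\<^sub>R \<rho>)"
    and p: "psd P1" "psd P2" "X \<in> C" "t \<ge> 0"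
    using assms unfolding sandwich_cone_def by blast
  have "c *\<^sub>R m = (c *\<^sub>R P1 - c *\<^sub>R X + (c * t) *\<^sub>R \<rho>, c *\<^sub>R P2 + c *\<^sub>R X - ((c * t) * K) *\<^sub>R \<rho>)"
    unfolding m by (simp add: scaleR_diff_right scaleR_add_right mult.assoc)
  also have "\<dots> \<in> sandwich_cone \<rho> K C"
    using p c by (intro sandwich_coneI psd_scaleR conicD[OF C]) auto
  finally show ?thesis .
qed

lemma sandwich_cone_add:
  assumes "m1 \<in> sandwich_cone \<rho> K C" "m2 \<in> sandwich_cone \<rho> K C" and C: "convex_cone C"
  shows "m1 + m2 \<in> sandwich_cone \<rho> K C"
proof -
  obtain P1 P2 X t where m1: "m1 = (P1 - X + t *\<^sub>R \<rho>, P2 + X - (t * K) *\<^sub>R \<rho>)"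
    and p: "psd P1" "psd P2" "X \<in> C" "t \<ge> 0" using assms(1) unfolding sandwich_cone_def by blast
  obtain Q1 Q2 Y u where m2: "m2 = (Q1 - Y + u *\<^sub>R \<rho>, Q2 + Y - (u * K) *\<^sub>R \<rho>)"
    and q: "psd Q1" "psd Q2" "Y \<in> C" "u \<ge> 0" using assms(2) unfolding sandwich_cone_def by blast
  have "m1 + m2 = ((P1 + Q1) - (X + Y) + (t + u) *\<^sub>R \<rho>, (P2 + Q2) + (X + Y) - ((t + u) * K) *\<^sub>R \<rho>)"
    unfolding m1 m2 by (simp add: algebra_simps)
  also have "\<dots> \<in> sandwich_cone \<rho> K C"
    using p q by (intro sandwich_coneI psd_add convex_cone_add[OF C]) auto
  finally show ?thesis .
qed

lemma near_sandwich_if_in_closure: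
  fixes \<rho> :: "complex^'n^'n"
  assumes r: "density \<rho>" and K: "K \<ge> 0"
    and C: "conic C" and zc: "(- \<rho>, 0) \<in> closure (sandwich_cone \<rho> K C)" and e: "e > 0"
  shows "\<exists>X W1 W2. X \<in> C \<and> psd (X - \<rho> + W1) \<and> psd (K *\<^sub>R \<rho> - X + W2) \<and> norm W1 < e \<and> norm W2 < e"
proof -
  obtain m where mM: "m \<in> sandwich_cone \<rho> K C" and d: "dist m (- \<rho>, 0) < e"
    using zc e unfolding closure_approachable by blast
  obtain P1 P2 X t where m: "m = (P1 - X + t *\<^sub>R \<rho>, P2 + X - (t * K) *\<^sub>R \<rho>)"
    and p: "psd P1" "psd P2" "X \<in> C" "t \<ge> 0"
    using mM unfolding sandwich_cone_def by blast
  define s where "s = 1 + t"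
  have s: "s \<ge> 1" using p(4) s_def by simp
  define Y1 where "Y1 = P1 - X + t *\<^sub>R \<rho> + \<rho>"
  define Y2 where "Y2 = P2 + X - (t * K) *\<^sub>R \<rho>"
  have "norm (Y1, Y2) < e" using d unfolding m Y1_def Y2_def dist_norm by simp
  then have "norm Y1 < e" "norm Y2 < e" using norm_fst_le[of Y1 Y2] norm_snd_le[of Y2 Y1] by linarith+
  moreover have "norm ((1 / s) *\<^sub>R Y) \<le> norm Y" for Y :: "complex^'n^'n"
    using s mult_left_le_one_le[of "norm Y" "1 / s"] by simp
  ultimately have small: "norm ((1 / s) *\<^sub>R Y1) < e" "norm ((1 / s) *\<^sub>R Y2) < e"
    using le_less_trans by blast+
  have "(1 / s) *\<^sub>R X - \<rho> + (1 / s) *\<^sub>R Y1 = (1 / s) *\<^sub>R (X + Y1 - s *\<^sub>R \<rho>)"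
    using s by (simp add: algebra_simps)
  also have "X + Y1 - s *\<^sub>R \<rho> = P1" unfolding Y1_def s_def by (simp add: algebra_simps)
  finally have lower: "psd ((1 / s) *\<^sub>R X - \<rho> + (1 / s) *\<^sub>R Y1)" using p s by (simp add: psd_scaleR)
  have "K *\<^sub>R \<rho> - (1 / s) *\<^sub>R X + (1 / s) *\<^sub>R Y2 = (1 / s) *\<^sub>R ((s * K) *\<^sub>R \<rho> - X + Y2)"
    using s by (simp add: algebra_simps)
  also have "(s * K) *\<^sub>R \<rho> - X + Y2 = K *\<^sub>R \<rho> + P2" unfolding Y2_def s_def by (simp add: algebra_simps)
  finally have upper: "psd (K *\<^sub>R \<rho> - (1 / s) *\<^sub>R X + (1 / s) *\<^sub>R Y2)"
    using p s K r unfolding density_def by (simp add: psd_scaleR psd_add)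
  show ?thesis using lower upper small conicD[OF C p(3), of "1 / s"] s by fastforce
qed

lemma sandwich_norm_bound:
  fixes X \<rho> V W :: "complex^'n^'n"
  assumes r: "density \<rho>" and p1: "psd (X - \<rho> + V)" and p2: "psd (K *\<^sub>R \<rho> - X + W)"
    and v: "norm V \<le> 1" and w: "norm W \<le> 1"
  shows "norm X \<le> real (CARD('n) * CARD('n)) * (\<bar>K\<bar> + 2 * real CARD('n)) + norm \<rho> + 1"
proof -
  define P where "P = X - \<rho> + V"
  define Q where "Q = K *\<^sub>R \<rho> - X + W"
  have trW: "Re (trace W) \<le> real CARD('n)" if "norm W \<le> 1" for W :: "complex^'n^'n"
  proof -
    have "real CARD('n) * norm W \<le> real CARD('n) * 1" using that by (intro mult_left_mono) auto
    then show ?thesis using cmod_trace_le_norm[of W] complex_Re_le_cmod[of "trace W"] by linarith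
  qed
  have "P + Q = K *\<^sub>R \<rho> - \<rho> + V + W" unfolding P_def Q_def by simp
  moreover have "trace \<rho> = 1" using r unfolding density_def by blast
  ultimately have "Re (trace (P + Q)) = K - 1 + Re (trace V) + Re (trace W)"
    by (simp add: trace_add trace_sub trace_scaleR)
  then have "Re (trace P) + Re (trace Q) = K - 1 + Re (trace V) + Re (trace W)"
    by (simp add: trace_add)
  moreover have "Re (trace Q) \<ge> 0" using psd_trace p2 Q_def by blast
  ultimately have "Re (trace P) \<le> \<bar>K\<bar> + 2 * real CARD('n)" using trW[OF v] trW[OF w] by linarith
  then have "real (CARD('n) * CARD('n)) * Re (trace P)
      \<le> real (CARD('n) * CARD('n)) * (\<bar>K\<bar> + 2 * real CARD('n))"
    by (intro mult_left_mono) auto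
  then have "norm P \<le> real (CARD('n) * CARD('n)) * (\<bar>K\<bar> + 2 * real CARD('n))"
    using psd_norm_le_trace[of P] p1 unfolding P_def by linarith
  moreover have "norm X \<le> norm P + norm \<rho> + norm V"
    using norm_triangle_ineq4[of "P + \<rho>" V] norm_triangle_ineq[of P \<rho>] unfolding P_def by simp
  ultimately show ?thesis using v by simp
qed

lemma compact_near_sandwiches:
  fixes \<rho> :: "complex^'n^'n"
  assumes r: "density \<rho>" and Ccl: "closed C"
  shows "compact {(X, V, W). X \<in> C \<and> psd (X - \<rho> + V) \<and> psd (K *\<^sub>R \<rho> - X + W) \<and> norm V + norm W \<le> 1}"
    (is "compact ?T")
proof -
  define lower where "lower p = fst p - \<rho> + fst (snd p)"
    for p :: "(complex^'n^'n) \<times> (complex^'n^'n) \<times> (complex^'n^'n)"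
  define upper where "upper p = K *\<^sub>R \<rho> - fst p + snd (snd p)"
    for p :: "(complex^'n^'n) \<times> (complex^'n^'n) \<times> (complex^'n^'n)"
  define err where "err p = norm (fst (snd p)) + norm (snd (snd p))"
    for p :: "(complex^'n^'n) \<times> (complex^'n^'n) \<times> (complex^'n^'n)"
  have T: "?T = fst -` C \<inter> lower -` {X. psd X} \<inter> upper -` {X. psd X} \<inter> err -` {..1}"
    unfolding lower_def upper_def err_def by auto
  have "closed ?T"
    unfolding T lower_def upper_def err_def
    by (intro closed_Int closed_vimage closed_psd Ccl closed_atMost continuous_intros)
  moreover have "bounded ?T"
    unfolding bounded_iff
  proof (intro exI ballI)
    fix p assume p: "p \<in> ?T"
    then have "err p \<le> 1" unfolding T by simp
    then have "norm (fst (snd p)) \<le> 1" "norm (snd (snd p)) \<le> 1" unfolding err_def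
      using norm_ge_zero[of "fst (snd p)"] norm_ge_zero[of "snd (snd p)"] by linarith+
    then have "norm (fst p) \<le> real (CARD('n) * CARD('n)) * (\<bar>K\<bar> + 2 * real CARD('n)) + norm \<rho> + 1"
      using p unfolding T lower_def upper_def
      by (intro sandwich_norm_bound[where V = "fst (snd p)" and W = "snd (snd p)", OF r]) auto
    moreover have "norm p \<le> norm (fst p) + err p"
      using norm_Pair_le[of "fst p" "snd p"] norm_Pair_le[of "fst (snd p)" "snd (snd p)"]
      unfolding err_def by simp
    ultimately show "norm p \<le> real (CARD('n) * CARD('n)) * (\<bar>K\<bar> + 2 * real CARD('n)) + norm \<rho> + 2"
      using \<open>err p \<le> 1\<close> by linarith
  qed
  ultimately show ?thesis by (simp add: compact_eq_bounded_closed)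
qed

lemma sandwich_if_in_closure:
  fixes \<rho> :: "complex^'n^'n"
  assumes r: "density \<rho>" and K: "K \<ge> 0" and C: "conic C" and Ccl: "closed C"
    and zc: "(- \<rho>, 0) \<in> closure (sandwich_cone \<rho> K C)"
  shows "\<exists>X\<in>C. psd (X - \<rho>) \<and> psd (K *\<^sub>R \<rho> - X)"
proof -
  let ?T = "{(X, V, W). X \<in> C \<and> psd (X - \<rho> + V) \<and> psd (K *\<^sub>R \<rho> - X + W) \<and> norm V + norm W \<le> 1}"
  define err where "err p = norm (fst (snd p)) + norm (snd (snd p))"
    for p :: "(complex^'n^'n) \<times> (complex^'n^'n) \<times> (complex^'n^'n)"
  have approx: "\<exists>p\<in>?T. err p < e" if e: "0 < e" "e \<le> 1" for e
  proof -
    obtain X V W where sw: "X \<in> C" "psd (X - \<rho> + V)" "psd (K *\<^sub>R \<rho> - X + W)"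
      and small: "norm V < e / 2" "norm W < e / 2"
      using near_sandwich_if_in_closure[OF r K C zc, of "e / 2"] e by auto
    then have "(X, V, W) \<in> ?T" "err (X, V, W) < e" using e unfolding err_def by simp_all
    then show ?thesis by blast
  qed
  obtain p0 where "p0 \<in> ?T" using approx[of 1] by (meson zero_less_one order_refl)
  then have ne: "?T \<noteq> {}" by (rule ex_in_conv[THEN iffD1, OF exI])
  have "continuous_on ?T err" unfolding err_def by (intro continuous_intros)
  then obtain p where pT: "p \<in> ?T" and pmin: "\<And>q. q \<in> ?T \<Longrightarrow> err p \<le> err q"
    using continuous_attains_inf[OF compact_near_sandwiches[OF r Ccl] ne] by blast
  have "err p = 0"
  proof (rule ccontr)
    assume "err p \<noteq> 0"
    moreover have "err p \<ge> 0" unfolding err_def by simp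
    ultimately obtain q where q: "q \<in> ?T" "err q < min 1 (err p)" using approx[of "min 1 (err p)"] by auto
    then show False using pmin[OF q(1)] by simp
  qed
  moreover obtain X V W where p: "p = (X, V, W)" by (cases p) blast
  ultimately have "V = 0" "W = 0" unfolding err_def by (simp_all add: add_nonneg_eq_0_iff)
  moreover have "X \<in> C" "psd (X - \<rho> + V)" "psd (K *\<^sub>R \<rho> - X + W)" using pT unfolding p by simp_all
  ultimately show ?thesis by auto
qed

lemma farkas_sandwich:
  fixes \<rho> :: "complex^'n^'n"
  assumes r: "density \<rho>" and K: "K \<ge> 0" and C: "convex_cone C" "closed C"
    and no_sandwich: "\<not> (\<exists>X\<in>C. psd (X - \<rho>) \<and> psd (K *\<^sub>R \<rho> - X))"
  obtains A B where "\<And>P. psd P \<Longrightarrow> inner A P \<ge> 0" "\<And>P. psd P \<Longrightarrow> inner B P \<ge> 0"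
    "\<And>X. X \<in> C \<Longrightarrow> inner A X \<le> inner B X" "K * inner B \<rho> \<le> inner A \<rho>" "inner A \<rho> > 0"
proof -
  let ?M = "sandwich_cone \<rho> K C"
  have C0: "0 \<in> C" using convex_cone_contains_0[OF C(1)] .
  have conic: "conic C" using C(1) unfolding convex_cone_def by blast
  have mem: "(P1 - X + t *\<^sub>R \<rho>, P2 + X - (t * K) *\<^sub>R \<rho>) \<in> ?M"
    if "psd P1" "psd P2" "X \<in> C" "t \<ge> 0" for P1 P2 X t
    using that by (rule sandwich_coneI)
  have "convex_cone ?M"
    unfolding convex_cone_iff
  proof (intro conjI ballI allI impI)
    show "0 \<in> ?M" using mem[OF psd_0 psd_0 C0, of 0] by (simp add: zero_prod_def)
    show "x + y \<in> ?M" if "x \<in> ?M" "y \<in> ?M" for x y using that C(1) by (rule sandwich_cone_add)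
    show "c *\<^sub>R x \<in> ?M" if "x \<in> ?M" "c \<ge> 0" for x c using that conic by (rule sandwich_cone_scaleR)
  qed
  moreover have "(- \<rho>, 0) \<notin> closure ?M"
    using sandwich_if_in_closure[OF r K conic C(2)] no_sandwich by blast
  ultimately obtain a where neg: "inner a (- \<rho>, 0) < 0" and pos: "\<And>m. m \<in> ?M \<Longrightarrow> inner a m \<ge> 0"
    using convex_cone_separation by blast
  obtain A B where a: "a = (A, B)" by (cases a)
  show ?thesis
  proof
    show "inner A P \<ge> 0" if "psd P" for P
      using pos[OF mem[OF that psd_0 C0, of 0]] a by simp
    show "inner B P \<ge> 0" if "psd P" for P
      using pos[OF mem[OF psd_0 that C0, of 0]] a by simp
    show "inner A X \<le> inner B X" if "X \<in> C" for X
      using pos[OF mem[OF psd_0 psd_0 that, of 0]] a by (simp add: inner_minus_right)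
    show "K * inner B \<rho> \<le> inner A \<rho>"
      using pos[OF mem[OF psd_0 psd_0 C0, of 1]] a by (simp add: inner_minus_right)
    show "inner A \<rho> > 0" using neg a by (simp add: inner_minus_right)
  qed
qed

definition outputs :: "(complex^'n^'n) set \<Rightarrow> (complex^'m^'m) set \<Rightarrow> complex^'n^'n \<Rightarrow> (complex^'m^'m) set" where
  "outputs F F' \<rho> = {(1 / Re (trace (E \<rho>))) *\<^sub>R E \<rho> | E. E \<in> RNG_ops F F' \<and> Re (trace (E \<rho>)) > 0}"

lemma prob_transform_iff_closure_outputs: "prob_transform F F' \<rho> \<tau> \<longleftrightarrow> \<tau> \<in> closure (outputs F F' \<rho>)"
  unfolding prob_transform_def outputs_def ..

lemma trace_measure_prepare_le:
  assumes Ha: "trace_positive Ha" and Hb: "trace_positive Hb" and P: "psd P" and Q: "psd Q"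
    and X: "psd X"
  shows "Re (trace (measure_prepare Ha Hb P Q X))
    \<le> (entry_sum Ha * Re (trace P) + entry_sum Hb * Re (trace Q)) * Re (trace X)"
proof -
  have "Re (trace (H ** X)) \<le> entry_sum H * Re (trace X)" for H
    using cmod_trace_mult_le[OF X, of H] complex_Re_le_cmod[of "trace (H ** X)"] by linarith
  then have "Re (trace (Ha ** X)) * Re (trace P) + Re (trace (Hb ** X)) * Re (trace Q)
      \<le> entry_sum Ha * Re (trace X) * Re (trace P) + entry_sum Hb * Re (trace X) * Re (trace Q)"
    using psd_trace[OF P] psd_trace[OF Q] by (intro add_mono mult_right_mono) auto
  moreover have "Re (trace (measure_prepare Ha Hb P Q X))
      = Re (trace (Ha ** X)) * Re (trace P) + Re (trace (Hb ** X)) * Re (trace Q)"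
    unfolding trace_measure_prepare
    by (subst trace_positive_real[OF Ha X], subst trace_positive_real[OF Hb X],
        subst psd_trace_real[OF P], subst psd_trace_real[OF Q]) (simp flip: of_real_mult of_real_add)
  ultimately show ?thesis by (simp add: algebra_simps)
qed

lemma scaled_measure_prepare_RNG:
  fixes F :: "(complex^'n^'n) set" and F' :: "(complex^'m^'m) set"
  assumes fF: "free_set F" and fF': "free_set F'"
    and Ha: "trace_positive Ha" and Hb: "trace_positive Hb" and P: "psd P" and Q: "psd Q"
    and free: "\<And>\<sigma>. \<sigma> \<in> F \<Longrightarrow> measure_prepare Ha Hb P Q \<sigma> \<in> free_cone F'"
  obtains s where "s > 0" "measure_prepare (s *\<^sub>R Ha) (s *\<^sub>R Hb) P Q \<in> RNG_ops F F'"
proof -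
  define c where "c = entry_sum Ha * Re (trace P) + entry_sum Hb * Re (trace Q)"
  have c: "c \<ge> 0" unfolding c_def using psd_trace[OF P] psd_trace[OF Q]
    by (intro add_nonneg_nonneg mult_nonneg_nonneg entry_sum_nonneg) auto
  define s where "s = 1 / (c + 1)"
  have s: "s > 0" "s * c \<le> 1" unfolding s_def using c by (auto simp: field_simps)
  define E where "E = measure_prepare (s *\<^sub>R Ha) (s *\<^sub>R Hb) P Q"
  have E: "E X = s *\<^sub>R measure_prepare Ha Hb P Q X" for X unfolding E_def by (rule measure_prepare_scaleR)
  have tni: "trace_nonincreasing E" unfolding trace_nonincreasing_def
  proof (intro allI impI)
    fix X :: "complex^'n^'n" assume X: "psd X"
    have "Re (trace (E X)) \<le> s * (c * Re (trace X))"
      unfolding E trace_scaleR using trace_measure_prepare_le[OF Ha Hb P Q X] s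
      by (simp add: c_def mult_left_mono)
    also have "\<dots> \<le> Re (trace X)"
      using mult_right_mono[OF s(2) conjunct2[OF psd_trace[OF X]]] by (simp add: mult.assoc)
    finally show "Re (trace (E X)) \<le> Re (trace X)" .
  qed
  have "E \<in> RNG_ops F F'" unfolding RNG_ops_def
  proof (intro CollectI conjI tni ballI)
    show "completely_positive E"
      unfolding E_def using s Ha Hb P Q
      by (intro completely_positive_measure_prepare trace_positive_scaleR) auto
    fix \<sigma> assume sF: "\<sigma> \<in> F"
    have "E \<sigma> \<in> free_cone F'" unfolding E using free[OF sF] s by (intro free_cone_scaleR) auto
    then obtain p \<sigma>' where Es: "E \<sigma> = p *\<^sub>R \<sigma>'" and p: "p \<ge> 0" and s'F: "\<sigma>' \<in> F'"
      unfolding free_cone_def by blast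
    have "density \<sigma>" "density \<sigma>'" using fF sF fF' s'F unfolding free_set_def by auto
    then have "p \<le> 1"
      using tni Es unfolding trace_nonincreasing_def density_def by (auto simp: trace_scaleR)
    then show "\<exists>\<sigma>'\<in>F'. \<exists>p. 0 \<le> p \<and> p \<le> 1 \<and> E \<sigma> = p *\<^sub>R \<sigma>'" using Es p s'F by blast
  qed
  then show ?thesis using that s unfolding E_def by blast
qed

lemma measure_prepare_output:
  fixes F :: "(complex^'n^'n) set" and F' :: "(complex^'m^'m) set"
  assumes fF: "free_set F" and fF': "free_set F'"
    and Ha: "trace_positive Ha" and Hb: "trace_positive Hb" and P: "psd P" and Q: "psd Q"
    and free: "\<And>\<sigma>. \<sigma> \<in> F \<Longrightarrow> measure_prepare Ha Hb P Q \<sigma> \<in> free_cone F'"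
    and pos: "Re (trace (measure_prepare Ha Hb P Q \<rho>)) > 0"
  shows "(1 / Re (trace (measure_prepare Ha Hb P Q \<rho>))) *\<^sub>R measure_prepare Ha Hb P Q \<rho> \<in> outputs F F' \<rho>"
proof -
  obtain s where s: "s > 0" and E: "measure_prepare (s *\<^sub>R Ha) (s *\<^sub>R Hb) P Q \<in> RNG_ops F F'"
    using scaled_measure_prepare_RNG[OF fF fF' Ha Hb P Q free] by blast
  have "Re (trace (measure_prepare (s *\<^sub>R Ha) (s *\<^sub>R Hb) P Q \<rho>)) = s * Re (trace (measure_prepare Ha Hb P Q \<rho>))"
    unfolding measure_prepare_scaleR trace_scaleR by simp
  then show ?thesis
    unfolding outputs_def using pos s E
    by (intro CollectI exI[of _ "measure_prepare (s *\<^sub>R Ha) (s *\<^sub>R Hb) P Q"]) (simp add: measure_prepare_scaleR)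
qed

lemma outputs_nonempty:
  fixes F :: "(complex^'n^'n) set" and F' :: "(complex^'m^'m) set"
  assumes fF: "free_set F" and fF': "free_set F'" and r: "density \<rho>"
  shows "\<exists>\<tau>\<in>outputs F F' \<rho>. density \<tau>"
proof -
  obtain \<sigma>' where s'F: "\<sigma>' \<in> F'" and s': "density \<sigma>'" using fF' unfolding free_set_def by blast
  have prep: "measure_prepare (mat 1) 0 \<sigma>' 0 X = \<sigma>'" if "density X" for X :: "complex^'n^'n"
    using that unfolding measure_prepare_def density_def by (simp add: cscale_def vec_eq_iff)
  have "\<sigma>' \<in> free_cone F'" using s'F unfolding free_cone_def by (auto intro!: exI[of _ "1::real"])
  moreover have "trace_positive (mat 1 :: complex^'n^'n)" "trace_positive (0 :: complex^'n^'n)"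
    unfolding trace_positive_def using psd_trace by auto
  ultimately have "(1 / Re (trace (measure_prepare (mat 1) 0 \<sigma>' 0 \<rho>))) *\<^sub>R measure_prepare (mat 1) 0 \<sigma>' 0 \<rho>
      \<in> outputs F F' \<rho>"
    using fF s' r prep psd_0 unfolding free_set_def density_def
    by (intro measure_prepare_output[OF fF fF']) auto
  then show ?thesis using prep[OF r] s' unfolding density_def by auto
qed

lemma target_noise_mixture:
  fixes a b c :: real
  assumes v: "cinner v v = 1" and w: "psd \<omega>" and tw: "trace \<omega> = complex_of_real c"
    and a: "a > 0" and b: "b \<ge> 0" and c: "c \<ge> 0"
  defines "\<tau> \<equiv> (1 / (a + c * b)) *\<^sub>R (a *\<^sub>R outer v + b *\<^sub>R \<omega>)"
  shows "density \<tau>" and "a / (a + c * b) \<le> Re (qform \<tau> v)"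
proof -
  have ab: "a + c * b > 0" using a b c by (simp add: add_pos_nonneg)
  show "density \<tau>" unfolding density_def
  proof
    show "psd \<tau>" unfolding \<tau>_def using ab a b psd_outer w by (intro psd_scaleR psd_add) auto
    have "trace \<tau> = complex_of_real ((a + b * c) / (a + c * b))"
      unfolding \<tau>_def by (simp add: trace_add trace_scaleR trace_outer v tw)
    then show "trace \<tau> = 1" using ab by (simp add: mult.commute)
  qed
  have "Re (qform \<tau> v) = (a + b * Re (qform \<omega> v)) / (a + c * b)"
    unfolding \<tau>_def by (simp add: qform_scaleR qform_add qform_outer v)
  moreover have "Re (qform \<omega> v) \<ge> 0" using w psd_def by blast
  ultimately show "a / (a + c * b) \<le> Re (qform \<tau> v)" using ab b by (simp add: divide_right_mono)
qed

lemma pure_target_output: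
  fixes F :: "(complex^'n^'n) set" and F' :: "(complex^'m^'m) set"
  assumes fF: "free_set F" and fF': "free_set F'" and r: "density \<rho>" and v: "cinner v v = 1"
    and A: "\<And>P. psd P \<Longrightarrow> inner A P \<ge> 0" and B: "\<And>P. psd P \<Longrightarrow> inner B P \<ge> 0"
    and Apos: "inner A \<rho> > 0"
    and w: "psd \<omega>" and tw: "trace \<omega> = complex_of_real c" and c: "c \<ge> 0"
    and free: "\<And>\<sigma>. \<sigma> \<in> F \<Longrightarrow> inner A \<sigma> *\<^sub>R outer v + inner B \<sigma> *\<^sub>R \<omega> \<in> free_cone F'"
  shows "\<exists>\<tau>\<in>outputs F F' \<rho>. density \<tau> \<and> inner A \<rho> / (inner A \<rho> + c * inner B \<rho>) \<le> Re (qform \<tau> v)"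
proof -
  let ?M = "measure_prepare (hermitian_part A) (hermitian_part B) (outer v) \<omega>"
  have pr: "psd \<rho>" using r density_def by blast
  define a where "a = inner A \<rho>"
  define b where "b = inner B \<rho>"
  have b0: "b \<ge> 0" using B pr unfolding b_def by blast
  have Mr: "?M \<rho> = a *\<^sub>R outer v + b *\<^sub>R \<omega>"
    unfolding a_def b_def by (rule measure_prepare_hermitian_part[OF psd_hermitian[OF pr]])
  have trM: "Re (trace (a *\<^sub>R outer v + b *\<^sub>R \<omega>)) = a + c * b"
    by (simp add: trace_add trace_scaleR trace_outer v tw)
  have "?M \<sigma> \<in> free_cone F'" if "\<sigma> \<in> F" for \<sigma>
  proof -
    have "hermitian \<sigma>" using that fF psd_hermitian unfolding free_set_def density_def by blast
    show ?thesis unfolding measure_prepare_hermitian_part[OF \<open>hermitian \<sigma>\<close>] by (rule free[OF that])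
  qed
  moreover have "a + c * b > 0" using Apos b0 c unfolding a_def by (simp add: add_pos_nonneg)
  then have "Re (trace (?M \<rho>)) > 0" unfolding Mr trM .
  ultimately have "(1 / Re (trace (?M \<rho>))) *\<^sub>R ?M \<rho> \<in> outputs F F' \<rho>"
    by (intro measure_prepare_output[OF fF fF' trace_positive_hermitian_part trace_positive_hermitian_part
          psd_outer w]) (use A B in auto)
  then have "(1 / (a + c * b)) *\<^sub>R (a *\<^sub>R outer v + b *\<^sub>R \<omega>) \<in> outputs F F' \<rho>" unfolding Mr trM .
  then show ?thesis
    unfolding a_def[symmetric] b_def[symmetric]
    using target_noise_mixture[OF v w tw Apos[folded a_def] b0 c] by (intro bexI conjI)
qed

lemma ratio_le_ratio:
  fixes a b K c0 c1 :: real
  assumes a: "a > 0" and b: "b \<ge> 0" and K: "K \<ge> 0" and aK: "K * b \<le> a" and c: "0 \<le> c0" "c0 \<le> c1"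
  shows "K / (K + c1) \<le> a / (a + c0 * b)"
proof (cases "K + c1 = 0")
  case True then show ?thesis using a b c by (simp add: add_pos_nonneg)
next
  case False
  then have p1: "K + c1 > 0" using K c by linarith
  have p2: "a + c0 * b > 0" using a b c by (simp add: add_pos_nonneg)
  have "K * b * c0 \<le> a * c0" using aK c by (simp add: mult_right_mono)
  also have "\<dots> \<le> a * c1" using a c by (simp add: mult_left_mono)
  finally have "K * (a + c0 * b) \<le> a * (K + c1)" by (simp add: algebra_simps)
  then show ?thesis using p1 p2 by (simp add: divide_simps mult.commute)
qed

lemma fidelity_bound_from_separation:
  fixes F :: "(complex^'n^'n) set" and F' :: "(complex^'m^'m) set"
  assumes fF: "free_set F" and fF': "free_set F'" and r: "density \<rho>" and v: "cinner v v = 1"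
    and K: "K \<ge> 0"
    and A: "\<And>P. psd P \<Longrightarrow> inner A P \<ge> 0" and B: "\<And>P. psd P \<Longrightarrow> inner B P \<ge> 0"
    and AK: "K * inner B \<rho> \<le> inner A \<rho>" and Apos: "inner A \<rho> > 0"
    and w: "psd \<omega>" and tw: "trace \<omega> = complex_of_real (l - 1)" and l: "1 \<le> l" "l < R'"
    and free: "\<And>\<sigma>. \<sigma> \<in> F \<Longrightarrow> inner A \<sigma> *\<^sub>R outer v + inner B \<sigma> *\<^sub>R \<omega> \<in> free_cone F'"
  shows "\<exists>\<tau>\<in>outputs F F' \<rho>. density \<tau> \<and> K / (K + (R' - 1)) \<le> Re (qform \<tau> v)"
proof -
  obtain \<tau> where "\<tau> \<in> outputs F F' \<rho>" "density \<tau>"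
    and "inner A \<rho> / (inner A \<rho> + (l - 1) * inner B \<rho>) \<le> Re (qform \<tau> v)"
    using pure_target_output[OF fF fF' r v A B Apos w tw] free l by auto
  moreover have "K / (K + (R' - 1)) \<le> inner A \<rho> / (inner A \<rho> + (l - 1) * inner B \<rho>)"
    using Apos B[OF conjunct1[OF r[unfolded density_def]]] K AK l by (intro ratio_le_ratio) auto
  ultimately show ?thesis by force
qed

lemma fidelity_bound_std_robustness:
  fixes F :: "(complex^'n^'n) set" and F' :: "(complex^'m^'m) set"
  assumes fF: "free_set F" and fF': "free_set F'" and r: "density \<rho>" and v: "cinner v v = 1"
    and K: "K \<ge> 0" and KO: "ereal K < Omega F \<rho>" and RR: "std_robustness F' (outer v) < ereal R'"
  shows "\<exists>\<tau>\<in>outputs F F' \<rho>. density \<tau> \<and> K / (K + (R' - 1)) \<le> Re (qform \<tau> v)"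
proof -
  have cF: "convex F" "F \<noteq> {}" and cF': "convex F'" using fF fF' free_set_def by auto
  have "\<not> (\<exists>X\<in>free_cone F. psd (X - \<rho>) \<and> psd (K *\<^sub>R \<rho> - X))"
    using Omega_le_if_sandwich[OF fF r K] KO by force
  then obtain A B where A: "\<And>P. psd P \<Longrightarrow> inner A P \<ge> 0" and B: "\<And>P. psd P \<Longrightarrow> inner B P \<ge> 0"
    and BA: "\<And>X. X \<in> free_cone F \<Longrightarrow> inner A X \<le> inner B X"
    and AK: "K * inner B \<rho> \<le> inner A \<rho>" and Apos: "inner A \<rho> > 0"
    using farkas_sandwich[OF r K convex_cone_free_cone[OF fF] closed_free_cone[OF fF]] by blast
  obtain \<sigma>' l where s'F: "\<sigma>' \<in> F'" and fl: "free_le F' (outer v) (l *\<^sub>R \<sigma>')" and lR: "l < R'"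
    using RR unfolding std_robustness_def RmaxF_def by (auto simp: INF_less_iff Inf_less_iff)
  define \<omega> where "\<omega> = l *\<^sub>R \<sigma>' - outer v"
  have wc: "\<omega> \<in> free_cone F'" using fl unfolding free_le_def \<omega>_def .
  have tw: "trace \<omega> = complex_of_real (l - 1)"
    using s'F fF' unfolding \<omega>_def free_set_def density_def by (simp add: trace_sub trace_scaleR trace_outer v)
  have l1: "l \<ge> 1" using psd_trace[OF psd_if_free_cone[OF fF' wc]] tw by simp
  have target: "outer v + \<omega> \<in> free_cone F'"
    using s'F l1 unfolding \<omega>_def free_cone_def by (intro CollectI exI[of _ l]) auto
  have "inner A \<sigma> *\<^sub>R outer v + inner B \<sigma> *\<^sub>R \<omega> \<in> free_cone F'" if sF: "\<sigma> \<in> F" for \<sigma>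
  proof -
    have "\<sigma> \<in> free_cone F" using sF unfolding free_cone_def by (auto intro!: exI[of _ "1::real"])
    then have "inner B \<sigma> - inner A \<sigma> \<ge> 0" using BA by force
    moreover have "inner A \<sigma> \<ge> 0" using A sF fF unfolding free_set_def density_def by blast
    moreover have "inner A \<sigma> *\<^sub>R outer v + inner B \<sigma> *\<^sub>R \<omega>
        = inner A \<sigma> *\<^sub>R (outer v + \<omega>) + (inner B \<sigma> - inner A \<sigma>) *\<^sub>R \<omega>"
      by (simp add: algebra_simps)
    ultimately show ?thesis
      using free_cone_add[OF cF' free_cone_scaleR[OF target] free_cone_scaleR[OF wc]] by simp
  qed
  then show ?thesis
    using fidelity_bound_from_separation[OF fF fF' r v K A B AK Apos psd_if_free_cone[OF fF' wc] tw l1 lR]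
    by blast
qed

text \<open>Separating against the subspace span F makes the functionals agree on F, so every free
  state is sent to a multiple of outer v + \<omega>, and \<omega> need only be positive.\<close>

lemma fidelity_bound_gen_robustness:
  fixes F :: "(complex^'n^'n) set" and F' :: "(complex^'m^'m) set"
  assumes fF: "free_set F" and fF': "free_set F'" and r: "density \<rho>" and v: "cinner v v = 1"
    and aF: "affine_free F"
    and K: "K \<ge> 0" and KO: "ereal K < Omega F \<rho>" and RR: "gen_robustness F' (outer v) < ereal R'"
  shows "\<exists>\<tau>\<in>outputs F F' \<rho>. density \<tau> \<and> K / (K + (R' - 1)) \<le> Re (qform \<tau> v)"
proof -
  have "\<not> (\<exists>X\<in>span F. psd (X - \<rho>) \<and> psd (K *\<^sub>R \<rho> - X))"
    using Omega_le_if_sandwich[OF fF r K] free_cone_if_span[OF fF aF r] KO by force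
  then obtain A B where A: "\<And>P. psd P \<Longrightarrow> inner A P \<ge> 0" and B: "\<And>P. psd P \<Longrightarrow> inner B P \<ge> 0"
    and BA: "\<And>X. X \<in> span F \<Longrightarrow> inner A X \<le> inner B X"
    and AK: "K * inner B \<rho> \<le> inner A \<rho>" and Apos: "inner A \<rho> > 0"
    using farkas_sandwich[OF r K convex_cone_span closed_subspace[OF subspace_span]] by blast
  obtain \<sigma>' l where s'F: "\<sigma>' \<in> F'" and fl: "loewner_le (outer v) (l *\<^sub>R \<sigma>')" and lR: "l < R'"
    using RR unfolding gen_robustness_def Rmax_def by (auto simp: INF_less_iff Inf_less_iff)
  define \<omega> where "\<omega> = l *\<^sub>R \<sigma>' - outer v"
  have w: "psd \<omega>" using fl unfolding loewner_le_def \<omega>_def .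
  have tw: "trace \<omega> = complex_of_real (l - 1)"
    using s'F fF' unfolding \<omega>_def free_set_def density_def by (simp add: trace_sub trace_scaleR trace_outer v)
  have l1: "l \<ge> 1" using psd_trace[OF w] tw by simp
  have "inner A \<sigma> *\<^sub>R outer v + inner B \<sigma> *\<^sub>R \<omega> \<in> free_cone F'" if sF: "\<sigma> \<in> F" for \<sigma>
  proof -
    have "inner B \<sigma> = inner A \<sigma>"
      using BA[OF span_base[OF sF]] BA[OF span_neg[OF span_base[OF sF]]] by (simp add: inner_minus_right)
    moreover have "inner A \<sigma> \<ge> 0" using A sF fF unfolding free_set_def density_def by blast
    ultimately show ?thesis
      using s'F l1 unfolding \<omega>_def free_cone_def
      by (intro CollectI exI[of _ "inner A \<sigma> * l"] exI[of _ \<sigma>']) (simp add: algebra_simps)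
  qed
  then show ?thesis
    using fidelity_bound_from_separation[OF fF fF' r v K A B AK Apos w tw l1 lR] by blast
qed

lemma eps_threshold_infinite_robustness: "eps_threshold \<Omega> \<infinity> = 1"
  unfolding eps_threshold_def by simp

lemma eps_threshold_infinite_Omega:
  assumes "r \<ge> 1" shows "eps_threshold \<infinity> (ereal r) = 0"
proof (cases "r = 1")
  case True
  then show ?thesis unfolding eps_threshold_def by (simp add: one_ereal_def zero_ereal_def[symmetric])
next
  case False
  then show ?thesis using assms unfolding eps_threshold_def by (simp add: one_ereal_def)
qed

lemma eps_threshold_finite:
  assumes w: "w > 0" and r: "r \<ge> 1"
  shows "eps_threshold (ereal w) (ereal r) = ereal ((r - 1) / (w + r - 1))"
proof (cases "r = 1")
  case True
  then show ?thesis unfolding eps_threshold_def using w by (simp add: one_ereal_def zero_ereal_def[symmetric])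
next
  case False
  then have r1: "r - 1 > 0" using r by simp
  then have "ereal w * inverse (ereal r - 1) + 1 = ereal (w / (r - 1) + 1)"
    by (simp add: one_ereal_def divide_inverse)
  moreover have "w / (r - 1) + 1 > 0" using w r1 by (simp add: add_pos_nonneg)
  ultimately show ?thesis unfolding eps_threshold_def using w r1 by (simp add: field_simps)
qed

lemma threshold_approach_infinite_Omega:
  fixes r \<epsilon> \<delta> :: real
  assumes r: "r \<ge> 1" and \<epsilon>: "\<epsilon> \<ge> 0" and \<delta>: "\<delta> > 0"
  shows "\<exists>K R'. 0 \<le> K \<and> r < R' \<and> 1 - \<epsilon> - \<delta> \<le> K / (K + (R' - 1))"
proof (intro exI conjI)
  define K where "K = (r + 1) / \<delta>"
  show K0: "0 \<le> K" unfolding K_def using r \<delta> by simp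
  show "r < r + 1" by simp
  have "(1 - \<epsilon> - \<delta>) * (K + r) \<le> (1 - \<delta>) * (K + r)"
    using K0 r \<epsilon> by (intro mult_right_mono) auto
  also have "\<dots> \<le> K" using \<delta> r unfolding K_def by (simp add: field_simps)
  finally show "1 - \<epsilon> - \<delta> \<le> K / (K + (r + 1 - 1))"
    using K0 r by (simp add: le_divide_eq)
qed

lemma threshold_approach_finite:
  fixes w r \<epsilon> \<delta> :: real
  assumes w: "w \<ge> 1" and r: "r \<ge> 1" and \<epsilon>: "1 - \<epsilon> \<le> w / (w + r - 1)" and \<delta>: "\<delta> > 0"
  shows "\<exists>K R'. 0 \<le> K \<and> K < w \<and> r < R' \<and> 1 - \<epsilon> - \<delta> \<le> K / (K + (R' - 1))"
proof (intro exI conjI)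
  define D where "D = w + r - 1"
  have D: "D \<ge> 1" unfolding D_def using w r by simp
  define \<eta> where "\<eta> = min (\<delta> * D) (w / 2)"
  have \<eta>: "\<eta> > 0" "\<eta> \<le> \<delta> * D" "\<eta> \<le> w / 2" unfolding \<eta>_def using \<delta> D w by auto
  show "0 \<le> w - \<eta>" "w - \<eta> < w" "r < r + \<eta>" using \<eta> w by auto
  have "\<eta> / D \<le> \<delta>" using \<eta> D by (simp add: divide_le_eq mult.commute)
  then have "1 - \<epsilon> - \<delta> \<le> w / D - \<eta> / D" using \<epsilon> unfolding D_def by simp
  also have "\<dots> = (w - \<eta>) / D" by (simp add: diff_divide_distrib)
  also have "D = w - \<eta> + (r + \<eta> - 1)" unfolding D_def by simp
  finally show "1 - \<epsilon> - \<delta> \<le> (w - \<eta>) / (w - \<eta> + (r + \<eta> - 1))" .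
qed

lemma threshold_approach:
  fixes \<Omega> R :: ereal and \<epsilon> \<delta> :: real
  assumes \<Omega>: "\<Omega> \<ge> 1" and R: "R \<ge> 1" and \<epsilon>: "ereal \<epsilon> \<ge> eps_threshold \<Omega> R" "\<epsilon> < 1"
    and \<delta>: "\<delta> > 0"
  shows "\<exists>K R'. 0 \<le> K \<and> ereal K < \<Omega> \<and> R < ereal R' \<and> 1 - \<epsilon> - \<delta> \<le> K / (K + (R' - 1))"
proof -
  obtain r where Rr: "R = ereal r"
    using R \<epsilon> eps_threshold_infinite_robustness by (cases R) auto
  have r: "r \<ge> 1" using R Rr by simp
  show ?thesis
  proof (cases \<Omega>)
    case PInf
    then show ?thesis
      using threshold_approach_infinite_Omega[OF r _ \<delta>, of \<epsilon>] \<epsilon> eps_threshold_infinite_Omega[OF r] Rr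
      by auto
  next
    case (real w)
    have w: "w \<ge> 1" using \<Omega> real by simp
    have "\<epsilon> \<ge> (r - 1) / (w + r - 1)" using \<epsilon> eps_threshold_finite[of w r] w r real Rr by simp
    moreover have "1 - (r - 1) / (w + r - 1) = w / (w + r - 1)" using w r by (simp add: field_simps)
    ultimately have "1 - \<epsilon> \<le> w / (w + r - 1)" by linarith
    then show ?thesis using threshold_approach_finite[OF w r _ \<delta>] real Rr by auto
  qed (use \<Omega> in simp)
qed

lemma closure_attains_qform_bound:
  fixes S :: "(complex^'m^'m) set"
  assumes approx: "\<And>\<delta>. \<delta> > 0 \<Longrightarrow> \<exists>\<tau>\<in>S. density \<tau> \<and> c - \<delta> \<le> Re (qform \<tau> v)"
  shows "\<exists>\<tau>\<in>closure S. density \<tau> \<and> c \<le> Re (qform \<tau> v)"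
proof -
  define T where "T = {X::complex^'m^'m. density X} \<inter> closure S"
  have "compact T" unfolding T_def by (rule compact_Int_closed[OF compact_density closed_closure])
  moreover have "T \<noteq> {}" using approx[of 1] closure_subset unfolding T_def by fastforce
  moreover have "continuous_on T (\<lambda>X. Re (qform X v))" unfolding qform_def by (intro continuous_intros)
  ultimately obtain \<tau> where \<tau>: "\<tau> \<in> T" and max: "\<And>X. X \<in> T \<Longrightarrow> Re (qform X v) \<le> Re (qform \<tau> v)"
    using continuous_attains_sup by metis
  have "c \<le> Re (qform \<tau> v)"
  proof (rule ccontr)
    assume "\<not> c \<le> Re (qform \<tau> v)"
    then obtain X where X: "X \<in> S" "density X" and big: "c - (c - Re (qform \<tau> v)) / 2 \<le> Re (qform X v)"
      using approx[of "(c - Re (qform \<tau> v)) / 2"] by auto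
    have "X \<in> T" unfolding T_def using X closure_subset by blast
    then show False using max[OF \<open>X \<in> T\<close>] big \<open>\<not> c \<le> Re (qform \<tau> v)\<close> by argo
  qed
  then show ?thesis using \<tau> unfolding T_def by blast
qed

lemma pure_fidelity_reachable:
  fixes F :: "(complex^'n^'n) set" and F' :: "(complex^'m^'m) set"
  assumes fF: "free_set F" and fF': "free_set F'" and r: "density \<rho>" and v: "cinner v v = 1"
    and R: "R \<ge> 1"
    and bound: "\<And>K R'. 0 \<le> K \<Longrightarrow> ereal K < Omega F \<rho> \<Longrightarrow> R < ereal R' \<Longrightarrow>
        \<exists>\<tau>\<in>outputs F F' \<rho>. density \<tau> \<and> K / (K + (R' - 1)) \<le> Re (qform \<tau> v)"
    and \<epsilon>: "ereal \<epsilon> \<ge> eps_threshold (Omega F \<rho>) R"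
  shows "\<exists>\<tau>. density \<tau> \<and> prob_transform F F' \<rho> \<tau> \<and> fidelity \<tau> (outer v) \<ge> 1 - \<epsilon>"
proof -
  have "\<exists>\<tau>\<in>closure (outputs F F' \<rho>). density \<tau> \<and> 1 - \<epsilon> \<le> Re (qform \<tau> v)"
  proof (cases "\<epsilon> \<ge> 1")
    case True
    obtain \<tau> where "\<tau> \<in> outputs F F' \<rho>" "density \<tau>" using outputs_nonempty[OF fF fF' r] by blast
    moreover have "Re (qform \<tau> v) \<ge> 0" using \<open>density \<tau>\<close> unfolding density_def psd_def by blast
    ultimately show ?thesis using True closure_subset by fastforce
  next
    case False
    show ?thesis
    proof (rule closure_attains_qform_bound)
      fix \<delta> :: real assume \<delta>: "\<delta> > 0"
      obtain K R' where KR: "0 \<le> K" "ereal K < Omega F \<rho>" "R < ereal R'"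
        and close: "1 - \<epsilon> - \<delta> \<le> K / (K + (R' - 1))"
        using threshold_approach[OF Omega_ge_1[OF fF r] R \<epsilon> _ \<delta>] False by auto
      obtain \<tau> where "\<tau> \<in> outputs F F' \<rho>" "density \<tau>" "K / (K + (R' - 1)) \<le> Re (qform \<tau> v)"
        using bound[OF KR] by blast
      then show "\<exists>\<tau>\<in>outputs F F' \<rho>. density \<tau> \<and> 1 - \<epsilon> - \<delta> \<le> Re (qform \<tau> v)"
        using close by (intro bexI[of _ \<tau>]) auto
    qed
  qed
  then obtain \<tau> where "\<tau> \<in> closure (outputs F F' \<rho>)" "density \<tau>" "1 - \<epsilon> \<le> Re (qform \<tau> v)"
    by blast
  then show ?thesis
    unfolding prob_transform_iff_closure_outputs using fidelity_pure[OF _ v] by (intro exI[of _ \<tau>]) auto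
qed

theorem theorem6:
  fixes F :: "(complex^'n^'n) set" and F' :: "(complex^'m^'m) set"
    and \<rho> :: "complex^'n^'n" and \<phi> :: "complex^'m^'m"
  assumes "free_set F" and "free_set F'"
    and "density \<rho>"
    and "pure_state \<phi>" and "\<phi> \<notin> F'"
  shows "(\<forall>\<epsilon>::real. ereal \<epsilon> \<ge> eps_threshold (Omega F \<rho>) (std_robustness F' \<phi>) \<longrightarrow>
            (\<exists>\<tau>. density \<tau> \<and> prob_transform F F' \<rho> \<tau> \<and> fidelity \<tau> \<phi> \<ge> 1 - \<epsilon>))
       \<and> (affine_free F \<and> affine_free F' \<longrightarrow>
          (\<forall>\<epsilon>::real. ereal \<epsilon> \<ge> eps_threshold (Omega F \<rho>) (gen_robustness F' \<phi>) \<longrightarrow>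
            (\<exists>\<tau>. density \<tau> \<and> prob_transform F F' \<rho> \<tau> \<and> fidelity \<tau> \<phi> \<ge> 1 - \<epsilon>)))"
proof -
  obtain v where \<phi>: "\<phi> = outer v" using assms(4) unfolding pure_state_def by blast
  have d: "density (outer v)" using assms(4) unfolding \<phi> pure_state_def by blast
  then have v: "cinner v v = 1" unfolding density_def trace_outer by blast
  note reachable = pure_fidelity_reachable[OF assms(1-3) v]
  show ?thesis
    unfolding \<phi>
  proof (intro conjI impI allI)
    fix \<epsilon> :: real
    assume "ereal \<epsilon> \<ge> eps_threshold (Omega F \<rho>) (std_robustness F' (outer v))"
    then show "\<exists>\<tau>. density \<tau> \<and> prob_transform F F' \<rho> \<tau> \<and> fidelity \<tau> (outer v) \<ge> 1 - \<epsilon>"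
      using reachable[OF std_robustness_ge_1[OF assms(2) d]
          fidelity_bound_std_robustness[OF assms(1-3) v]] by blast
  next
    fix \<epsilon> :: real
    assume "affine_free F \<and> affine_free F'"
      and "ereal \<epsilon> \<ge> eps_threshold (Omega F \<rho>) (gen_robustness F' (outer v))"
    then show "\<exists>\<tau>. density \<tau> \<and> prob_transform F F' \<rho> \<tau> \<and> fidelity \<tau> (outer v) \<ge> 1 - \<epsilon>"
      using reachable[OF gen_robustness_ge_1[OF assms(2) d]
          fidelity_bound_gen_robustness[OF assms(1-3) v]] by blast
  qed
qed

end
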